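(* Let $d\ge2$, $s\in(0,d)$ and $q\in[d-2,+\infty)$. Let $W_s(x)=|x|^{-s}\Phi(x/|x|)$ ($x\ne0$), $W_s(0)=+\infty$, with $\Phi:\mathbb{S}^{d-1}\to\mathbb{R}$ continuous, even and strictly positive. Let $E=RDB_1$ be an ellipsoid ($R\in\mathrm{SO}(d)$, $D$ positive-definite diagonal) and let $\mu_q^E$ be the push-forward of $\mu_q$ by $T^E(x)=RDx$. Then the potential $(W_s*\mu_q^E)(x)=\int W_s(x-y)\,d\mu_q^E(y)$ belongs to $L^1_{\mathrm{loc}}(\mathbb{R}^d)\cap C^0(\mathbb{R}^d\setminus\partial E)$. Moreover, if $0<s<\min(d,\frac{q+d}{2})$, then $W_s*\mu_q^E\in C^0(\mathbb{R}^d)$.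
   Context: For $q\ge d-2$, $\mu_q=c_{q,d}(1-|x|^2)^{\frac{q-d}{2}}\mathcal{L}^d\llcorner B_1$ if $q>d-2$ and $\mu_q=c_{q,d}\mathcal{H}^{d-1}\llcorner\partial B_1$ if $q=d-2$, where $c_{q,d}>0$ is the constant making $\mu_q$ a probability measure and $B_1$ is the closed unit ball centered at the origin. *)

theory Defs
  imports "HOL-Analysis.Analysis"
begin

definition Wker :: "real \<Rightarrow> (real^'n \<Rightarrow> real) \<Rightarrow> real^'n \<Rightarrow> ennreal" where
  "Wker s Phi x = (if x = 0 then \<infinity> else ennreal (norm x powr (- s) * Phi (sgn x)))"

definition potential :: "real \<Rightarrow> (real^'n \<Rightarrow> real) \<Rightarrow> (real^'n) measure \<Rightarrow> real^'n \<Rightarrow> ennreal" where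
  "potential s Phi M x = (\<integral>\<^sup>+ y. Wker s Phi (x - y) \<partial>M)"

text \<open>Normalized surface measure c H^(d-1) on the unit sphere, realised as the
  push-forward of the normalized Lebesgue measure on the unit ball under radial
  projection x |-> x/|x| (the cone-measure description of normalized H^(d-1) on the sphere).\<close>
definition sphere_prob :: "(real^('n::finite)) measure" where
  "sphere_prob = distr (uniform_measure lborel (cball 0 1)) borel sgn"

definition ball_dens :: "real \<Rightarrow> real^('n::finite) \<Rightarrow> ennreal" where
  "ball_dens q x = indicator (cball 0 1) x
      * ennreal ((1 - norm x ^ 2) powr ((q - real CARD('n)) / 2))"

definition mu_q :: "real \<Rightarrow> (real^('n::finite)) measure" where
  "mu_q q = (if q = real CARD('n) - 2 then sphere_prob
             else density lborel (\<lambda>x. ball_dens q x / (\<integral>\<^sup>+ y. ball_dens q (y::real^'n) \<partial>lborel)))"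

end

(* The potential is controlled by how much mass the measure puts on small balls. If
   mu(B(x,r)) <= C r^beta with beta > s uniformly for x in a set U, a dyadic decomposition
   shows that the part of W_s above a level L contributes O(L^(-(beta - s)/s)) to the
   potential, uniformly on U; so the potential is there the uniform limit of the potentials of
   the bounded continuous kernels min(W_s, L), hence finite and continuous.  Local
   integrability only needs s < d, by Tonelli.
   Off the unit sphere mu_q has such a bound with beta = d, and globally with
   beta = min(d, (q + d)/2): for q = d - 2 this is the dimension d - 1 of the sphere, and for
   q > d - 2 the blow-up (1 - |x|^2)^((q - d)/2) of the density near the sphere is summed over
   dyadic shells.  Finally T(x) = R D x is an invertible linear map, which preserves such bounds
   and maps the unit sphere onto the frontier of E. *)

theory Submission
  imports Defs
begin

section \<open>Measures with small mass on small balls\<close>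

definition ball_growth_on :: "'a::metric_space measure \<Rightarrow> 'a set \<Rightarrow> real \<Rightarrow> real \<Rightarrow> real \<Rightarrow> bool"
  where "ball_growth_on \<nu> U r0 C \<beta> \<longleftrightarrow>
    (\<forall>x\<in>U. \<forall>r. 0 < r \<longrightarrow> r \<le> r0 \<longrightarrow> emeasure \<nu> (ball x r) \<le> ennreal (C * r powr \<beta>))"

lemma ball_growth_onD:
  "ball_growth_on \<nu> U r0 C \<beta> \<Longrightarrow> x \<in> U \<Longrightarrow> 0 < r \<Longrightarrow> r \<le> r0
    \<Longrightarrow> emeasure \<nu> (ball x r) \<le> ennreal (C * r powr \<beta>)"
  by (simp add: ball_growth_on_def)

lemma ball_growth_on_mono:
  "ball_growth_on \<nu> U r0 C \<beta> \<Longrightarrow> V \<subseteq> U \<Longrightarrow> r1 \<le> r0 \<Longrightarrow> ball_growth_on \<nu> V r1 C \<beta>"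
  by (auto simp: ball_growth_on_def)

lemma ball_growth_on_lborel:
  "ball_growth_on (lborel :: 'a::euclidean_space measure) U r0 (unit_ball_vol DIM('a)) DIM('a)"
  by (simp add: ball_growth_on_def emeasure_ball powr_realpow)

lemma ball_growth_on_cmult:
  assumes "ball_growth_on \<nu> U r0 C \<beta>" "0 \<le> c"
    and "\<And>x r. emeasure \<nu>' (ball x r) = emeasure \<nu> (ball x r) * ennreal c"
  shows "ball_growth_on \<nu>' U r0 (C * c) \<beta>"
  unfolding ball_growth_on_def
proof (intro ballI allI impI)
  fix x r assume "x \<in> U" "0 < r" "r \<le> r0"
  then have "emeasure \<nu> (ball x r) * ennreal c \<le> ennreal (C * r powr \<beta>) * ennreal c"
    using assms(1) by (intro mult_right_mono ball_growth_onD) auto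
  then show "emeasure \<nu>' (ball x r) \<le> ennreal (C * c * r powr \<beta>)"
    using assms(2,3) by (simp add: ennreal_mult'' mult.commute mult.left_commute)
qed

lemma emeasure_singleton_eq_0_if_ball_growth:
  assumes growth: "ball_growth_on \<nu> {x} r0 C \<beta>" and "0 < r0" "0 < \<beta>"
    and sets: "sets \<nu> = sets borel"
  shows "emeasure \<nu> {x} = 0"
proof -
  have "((\<lambda>r. ennreal (C * r powr \<beta>)) \<longlongrightarrow> ennreal (C * 0 powr \<beta>)) (at_right 0)"
    using \<open>0 < \<beta>\<close> eventually_at_right_less[of "0::real"]
    by (intro tendsto_ennrealI tendsto_mult tendsto_const tendsto_powr') (auto elim: eventually_mono)
  moreover have "\<forall>\<^sub>F r in at_right 0. emeasure \<nu> {x} \<le> ennreal (C * r powr \<beta>)"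
  proof -
    have "\<forall>\<^sub>F r in at_right 0. 0 < r \<and> r \<le> r0"
      using \<open>0 < r0\<close> by (auto simp: eventually_at_right_field intro!: exI[of _ r0])
    then show ?thesis
    proof eventually_elim
      case (elim r)
      have "emeasure \<nu> {x} \<le> emeasure \<nu> (ball x r)"
        using elim by (intro emeasure_mono) (auto simp: sets)
      also have "\<dots> \<le> ennreal (C * r powr \<beta>)"
        using elim by (intro ball_growth_onD[OF growth]) auto
      finally show ?case .
    qed
  qed
  ultimately have "emeasure \<nu> {x} \<le> ennreal (C * 0 powr \<beta>)"
    by (intro tendsto_lowerbound) auto
  then show ?thesis by simp
qed

lemma dyadic_interval_exists:
  fixes t \<delta> :: real
  assumes "0 < t" "t < \<delta>"
  obtains k :: nat where "\<delta> / 2 ^ Suc k \<le> t" "t < \<delta> / 2 ^ k"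
proof -
  obtain N :: nat where "\<delta> / t < 2 ^ N" using real_arch_pow[of 2 "\<delta> / t"] by auto
  then have ex: "\<exists>K::nat. \<delta> / 2 ^ K \<le> t"
    using assms by (intro exI[of _ N]) (auto simp: field_simps)
  define K where "K = (LEAST K::nat. \<delta> / 2 ^ K \<le> t)"
  have K: "\<delta> / 2 ^ K \<le> t" unfolding K_def by (rule LeastI_ex[OF ex])
  then obtain k where k: "K = Suc k" using assms by (cases K) auto
  have "\<not> \<delta> / 2 ^ k \<le> t"
    using not_less_Least[of k "\<lambda>K. \<delta> / 2 ^ K \<le> t"] k unfolding K_def by auto
  then show thesis using K k that by auto
qed

lemma ennreal_le_suminf: "f k \<le> (\<Sum>i. f i :: ennreal)"
  using sum_le_suminf[of f "{k}"] by (simp add: summableI)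

lemma dyadic_powr_eq:
  fixes \<delta> s \<beta> :: real
  assumes "0 < \<delta>"
  shows "(\<delta> / 2 ^ Suc k) powr (-s) * (\<delta> / 2 ^ k) powr \<beta>
      = 2 powr s * \<delta> powr (\<beta> - s) * (2 powr (s - \<beta>)) ^ k"
proof -
  have pow2: "(2 ^ k :: real) powr a = 2 powr (real k * a)" for a
    by (simp add: powr_realpow[symmetric] powr_powr)
  have "(\<delta> / 2 ^ Suc k) powr (-s) * (\<delta> / 2 ^ k) powr \<beta>
      = 2 powr s * (\<delta> powr (\<beta> - s) / (2 ^ k) powr (\<beta> - s))"
    using assms by (simp add: powr_divide powr_mult powr_minus powr_diff field_simps)
  also have "(2 ^ k :: real) powr (\<beta> - s) = 1 / (2 powr (s - \<beta>)) ^ k"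
    by (simp add: pow2 powr_realpow[symmetric] powr_powr powr_minus_divide[symmetric] algebra_simps)
  finally show ?thesis by simp
qed

lemma indicator_ball_norm_powr_le_dyadic:
  fixes x y :: "'a::real_normed_vector"
  assumes s: "0 < s" and \<delta>: "0 < \<delta>"
  shows "indicator (ball x \<delta>) y * ennreal (norm (x - y) powr (-s))
    \<le> (\<Sum>k. ennreal ((\<delta> / 2 ^ Suc k) powr (-s)) * indicator (ball x (\<delta> / 2 ^ k)) y)"
proof (cases "y \<in> ball x \<delta> \<and> y \<noteq> x")
  case True
  then obtain k where k: "\<delta> / 2 ^ Suc k \<le> dist x y" "dist x y < \<delta> / 2 ^ k"
    using dyadic_interval_exists[of "dist x y" \<delta>] by auto
  have "norm (x - y) powr (-s) \<le> (\<delta> / 2 ^ Suc k) powr (-s)"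
    using k \<delta> s by (intro powr_mono2') (auto simp: dist_norm)
  then have "indicator (ball x \<delta>) y * ennreal (norm (x - y) powr (-s))
      \<le> ennreal ((\<delta> / 2 ^ Suc k) powr (-s)) * indicator (ball x (\<delta> / 2 ^ k)) y"
    using True k by (auto simp: indicator_def intro!: ennreal_leI)
  also have "\<dots> \<le> (\<Sum>k. ennreal ((\<delta> / 2 ^ Suc k) powr (-s)) * indicator (ball x (\<delta> / 2 ^ k)) y)"
    by (rule ennreal_le_suminf)
  finally show ?thesis .
qed (auto simp: indicator_def)

text \<open>Split the ball into the dyadic annuli \<open>\<delta>/2^(k+1) \<le> |x - y| < \<delta>/2^k\<close>; the growth
  bound makes the resulting series geometric with ratio \<open>2 powr (s - \<beta>) < 1\<close>.\<close>
lemma nn_integral_ball_norm_powr_le: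
  fixes \<nu> :: "'a::real_normed_vector measure"
  assumes sets: "sets \<nu> = sets borel" and growth: "ball_growth_on \<nu> {x} \<delta> C \<beta>"
    and s: "0 < s" "s < \<beta>" and C: "0 \<le> C" and \<delta>: "0 < \<delta>"
  shows "(\<integral>\<^sup>+y. indicator (ball x \<delta>) y * ennreal (norm (x - y) powr (-s)) \<partial>\<nu>)
           \<le> ennreal (C * 2 powr s / (1 - 2 powr (s - \<beta>)) * \<delta> powr (\<beta> - s))"
proof -
  define a where "a k = (\<delta> / 2 ^ Suc k) powr (-s)" for k :: nat
  define q where "q = 2 powr (s - \<beta>)"
  define A where "A = C * 2 powr s * \<delta> powr (\<beta> - s)"
  have q: "0 < q" "q < 1" using s by (auto simp: q_def powr_less_one)
  note pointwise = indicator_ball_norm_powr_le_dyadic[OF s(1) \<delta>, folded a_def]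
  have "(\<integral>\<^sup>+y. indicator (ball x \<delta>) y * ennreal (norm (x - y) powr (-s)) \<partial>\<nu>)
      \<le> (\<integral>\<^sup>+y. (\<Sum>k. ennreal (a k) * indicator (ball x (\<delta> / 2 ^ k)) y) \<partial>\<nu>)"
    by (intro nn_integral_mono pointwise)
  also have "\<dots> = (\<Sum>k. ennreal (a k) * emeasure \<nu> (ball x (\<delta> / 2 ^ k)))"
    by (subst nn_integral_suminf)
       (auto simp: sets nn_integral_cmult_indicator measurable_cong_sets[OF sets refl]
             intro!: borel_measurable_times_ennreal borel_measurable_indicator)
  also have "\<dots> \<le> (\<Sum>k. ennreal (A * q ^ k))"
  proof (intro suminf_le)
    fix k :: nat
    have "emeasure \<nu> (ball x (\<delta> / 2 ^ k)) \<le> ennreal (C * (\<delta> / 2 ^ k) powr \<beta>)"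
      using \<delta> by (intro ball_growth_onD[OF growth]) (auto simp: field_simps)
    then have "ennreal (a k) * emeasure \<nu> (ball x (\<delta> / 2 ^ k))
        \<le> ennreal (a k * (C * (\<delta> / 2 ^ k) powr \<beta>))"
      using C by (simp add: a_def ennreal_mult mult_left_mono)
    also have "a k * (C * (\<delta> / 2 ^ k) powr \<beta>) = A * q ^ k"
      using dyadic_powr_eq[OF \<delta>, of k s \<beta>] by (simp add: a_def q_def A_def)
    finally show "ennreal (a k) * emeasure \<nu> (ball x (\<delta> / 2 ^ k))
        \<le> ennreal (A * q ^ k)" .
  qed auto
  also have "\<dots> = ennreal (A * (1 / (1 - q)))"
    using q C by (simp add: A_def suminf_ennreal2 summable_geometric suminf_mult suminf_geometric)
  finally show ?thesis by (simp add: A_def q_def field_simps)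
qed

section \<open>The kernel and its potentials\<close>

lemma ennreal_min_plus_diff: "(a::ennreal) = min a b + (a - b)"
proof (cases "a = top")
  case False
  then show ?thesis
    by (cases "a \<le> b") (auto simp: diff_eq_0_iff_ennreal top.not_eq_extremum add_diff_inverse_ennreal)
qed simp

lemma Wker_nonzero: "x \<noteq> 0 \<Longrightarrow> Wker s Phi x = ennreal (norm x powr (-s) * Phi (sgn x))"
  by (simp add: Wker_def)

locale homogeneous_kernel =
  fixes s :: real and Phi :: "real^'n \<Rightarrow> real"
  assumes s_pos: "0 < s"
    and Phi_cont: "continuous_on (sphere 0 1) Phi"
    and Phi_pos: "\<forall>u\<in>sphere 0 1. 0 < Phi u"
begin

lemma Phi_bounds:
  obtains m M where "0 < m" "m \<le> M" "\<forall>u\<in>sphere 0 1. m \<le> Phi u \<and> Phi u \<le> M"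
proof -
  have "sphere (0::real^'n) 1 \<noteq> {}" by simp
  then obtain um uM where "um \<in> sphere 0 1" "\<forall>u\<in>sphere 0 1. Phi um \<le> Phi u"
    and "\<forall>u\<in>sphere 0 1. Phi u \<le> Phi uM"
    using continuous_attains_inf[OF compact_sphere _ Phi_cont]
      continuous_attains_sup[OF compact_sphere _ Phi_cont] by blast
  with Phi_pos show thesis by (intro that[of "Phi um" "Phi uM"]) auto
qed

lemma Wker_upper_bound:
  obtains M where "0 < M" "\<And>x. x \<noteq> 0 \<Longrightarrow> Wker s Phi x \<le> ennreal (M * norm x powr (-s))"
proof -
  obtain m M where "0 < m" "m \<le> M" and bounds: "\<forall>u\<in>sphere 0 1. m \<le> Phi u \<and> Phi u \<le> M"
    by (rule Phi_bounds)
  have "Wker s Phi x \<le> ennreal (M * norm x powr (-s))" if "x \<noteq> 0" for x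
    using that bounds[rule_format, of "sgn x"]
    by (auto simp: Wker_nonzero norm_sgn mult.commute intro!: ennreal_leI mult_left_mono)
  moreover have "0 < M" using \<open>0 < m\<close> \<open>m \<le> M\<close> by simp
  ultimately show thesis using that by blast
qed

lemma continuous_on_Wker_profile: "continuous_on (- {0}) (\<lambda>x. norm x powr (-s) * Phi (sgn x))"
  by (intro continuous_intros continuous_on_compose2[OF Phi_cont]) (auto simp: norm_sgn split: if_splits)

lemma borel_measurable_Wker: "Wker s Phi \<in> borel_measurable borel"
proof -
  have "(\<lambda>x. if x \<in> {0} then \<infinity> else ennreal (norm x powr (-s) * Phi (sgn x))) \<in> borel_measurable borel"
    by (intro borel_measurable_continuous_on_if continuous_on_ennreal continuous_on_Wker_profile) auto
  then show ?thesis by (simp add: Wker_def[abs_def])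
qed

definition trunc_kernel :: "real \<Rightarrow> real^'n \<Rightarrow> real"
  where "trunc_kernel L x = enn2real (min (Wker s Phi x) (ennreal L))"

lemma ennreal_trunc_kernel: "0 \<le> L \<Longrightarrow> ennreal (trunc_kernel L x) = min (Wker s Phi x) (ennreal L)"
  unfolding trunc_kernel_def by (intro ennreal_enn2real) (auto simp: min_def intro: le_less_trans)

lemma trunc_kernel_nonneg: "0 \<le> trunc_kernel L x"
  by (simp add: trunc_kernel_def)

lemma trunc_kernel_le: "0 \<le> L \<Longrightarrow> trunc_kernel L x \<le> L"
  unfolding trunc_kernel_def by (simp add: enn2real_leI)

text \<open>Near the origin the kernel exceeds any level \<open>L\<close>, so its truncation is constant there.\<close>
lemma continuous_trunc_kernel:
  assumes L: "0 < L"
  shows "continuous_on UNIV (trunc_kernel L)"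
proof -
  have profile: "trunc_kernel L x = min (norm x powr (-s) * Phi (sgn x)) L" if "x \<noteq> 0" for x
    using that L Phi_pos[rule_format, of "sgn x"]
    by (simp add: trunc_kernel_def Wker_nonzero min_ennreal norm_sgn)
  have "isCont (trunc_kernel L) x" if "x \<noteq> 0" for x
  proof -
    have "continuous_on (- {0}) (\<lambda>x. min (norm x powr (-s) * Phi (sgn x)) L)"
      by (intro continuous_intros continuous_on_Wker_profile)
    then have "continuous_on (- {0}) (trunc_kernel L)"
      by (rule continuous_on_cong[THEN iffD1, rotated 2]) (auto simp: profile)
    then show ?thesis using that continuous_on_eq_continuous_at[of "- {0}"] by auto
  qed
  moreover have "isCont (trunc_kernel L) 0"
  proof -
    obtain m M where m: "0 < m" and bounds: "\<forall>u\<in>sphere 0 1. m \<le> Phi u \<and> Phi u \<le> M"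
      by (rule Phi_bounds)
    define r where "r = (m / L) powr (1 / s)"
    have r: "0 < r" "r powr (-s) = L / m"
      using m L s_pos by (simp_all add: r_def powr_powr powr_minus_divide)
    have "trunc_kernel L x = L" if "norm x < r" for x
    proof (cases "x = 0")
      case False
      have "L = m * r powr (-s)" using r m by simp
      also have "\<dots> \<le> norm x powr (-s) * Phi (sgn x)"
        using that False s_pos m bounds[rule_format, of "sgn x"]
        by (subst mult.commute, intro mult_mono powr_mono2') (auto simp: norm_sgn)
      finally show ?thesis using False by (simp add: profile)
    qed (use L in \<open>simp add: trunc_kernel_def Wker_def\<close>)
    then have "\<forall>\<^sub>F x in nhds 0. trunc_kernel L x = trunc_kernel L 0"
      using r by (force simp: eventually_nhds_metric dist_norm)
    then show ?thesis
      unfolding continuous_at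
      by (intro tendsto_eventually) (auto simp: eventually_at_filter elim: eventually_mono)
  qed
  ultimately show ?thesis by (metis continuous_at_imp_continuous_on)
qed

lemma Wker_minus_level_le:
  assumes M: "0 < M" "\<And>x. x \<noteq> 0 \<Longrightarrow> Wker s Phi x \<le> ennreal (M * norm x powr (-s))"
    and L: "0 < L" and z: "z \<noteq> 0"
  shows "Wker s Phi z - ennreal L
    \<le> ennreal M * (indicator (ball 0 ((M / L) powr (1 / s))) z * ennreal (norm z powr (-s)))"
proof (cases "z \<in> ball 0 ((M / L) powr (1 / s))")
  case True
  have "Wker s Phi z - ennreal L \<le> ennreal (M * norm z powr (-s))"
    using order_trans[OF diff_le_self_ennreal M(2)[OF z]] .
  with True M(1) show ?thesis by (simp add: ennreal_mult)
next
  case False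
  then have "(M / L) powr (1 / s) \<le> norm z" by simp
  then have "norm z powr (-s) \<le> ((M / L) powr (1 / s)) powr (-s)"
    using M L s_pos by (intro powr_mono2') auto
  also have "\<dots> = L / M" using M L s_pos by (simp add: powr_powr powr_minus_divide)
  finally have "Wker s Phi z \<le> ennreal L"
    using M(2)[OF z] M(1) by (force simp: field_simps intro: order_trans ennreal_leI)
  then have "Wker s Phi z - ennreal L = 0"
    by (simp add: diff_eq_0_iff_ennreal) (metis ennreal_less_top order_le_less_trans)
  then show ?thesis by simp
qed

lemma Wker_le_level_plus:
  assumes M: "0 < M" "\<And>x. x \<noteq> 0 \<Longrightarrow> Wker s Phi x \<le> ennreal (M * norm x powr (-s))"
    and L: "0 < L" and z: "z \<noteq> 0"
  shows "Wker s Phi z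
    \<le> ennreal L + ennreal M * (indicator (ball 0 ((M / L) powr (1 / s))) z * ennreal (norm z powr (-s)))"
proof -
  have "Wker s Phi z = min (Wker s Phi z) (ennreal L) + (Wker s Phi z - ennreal L)"
    by (rule ennreal_min_plus_diff)
  also have "\<dots> \<le> ennreal L + ennreal M * (indicator (ball 0 ((M / L) powr (1 / s))) z * ennreal (norm z powr (-s)))"
    by (intro add_mono min.cobounded2 Wker_minus_level_le[OF M L z])
  finally show ?thesis .
qed

lemma Wker_diff_indicator_le:
  assumes M: "0 < M" "\<And>x. x \<noteq> 0 \<Longrightarrow> Wker s Phi x \<le> ennreal (M * norm x powr (-s))"
    and "x \<noteq> y"
  shows "Wker s Phi (x - y) * indicator K x
    \<le> ennreal M * indicator K x + ennreal M * (indicator (ball y 1) x * ennreal (norm (y - x) powr (-s)))"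
proof -
  have "Wker s Phi (x - y) \<le> ennreal M + ennreal M * (indicator (ball y 1) x * ennreal (norm (y - x) powr (-s)))"
    using Wker_le_level_plus[OF M M(1), of "x - y"] \<open>x \<noteq> y\<close> M(1)
    by (simp add: dist_norm norm_minus_commute indicator_def)
  then show ?thesis by (cases "x \<in> K") (auto simp: add_increasing)
qed

text \<open>Away from the singularity the kernel is bounded by \<open>M\<close>; near it, \<open>s < d\<close> makes
  \<open>|x - y| powr -s\<close> integrable by the growth of Lebesgue measure.\<close>
lemma nn_integral_Wker_indicator_bounded:
  assumes sd: "s < real CARD('n)" and K: "compact K"
  obtains B where "\<And>y. (\<integral>\<^sup>+ x. Wker s Phi (x - y) * indicator K x \<partial>lborel) \<le> ennreal B"
proof -
  obtain M where M: "0 < M" "\<And>x. x \<noteq> 0 \<Longrightarrow> Wker s Phi x \<le> ennreal (M * norm x powr (-s))"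
    using Wker_upper_bound by blast
  define d where "d = real CARD('n)"
  define I where "I = unit_ball_vol d * 2 powr s / (1 - 2 powr (s - d))"
  have "2 powr (s - d) < 1" using sd by (simp add: d_def powr_less_one)
  then have I: "0 \<le> I" by (simp add: I_def d_def)
  have Kb: "K \<in> sets borel" using K by (simp add: compact_imp_closed borel_closed)
  note pointwise = Wker_diff_indicator_le[OF M]
  have "(\<integral>\<^sup>+ x. Wker s Phi (x - y) * indicator K x \<partial>lborel)
      \<le> ennreal (M * measure lborel K + M * I)" for y
  proof -
    have "AE x in lborel. x \<noteq> y"
      by (rule AE_not_in[of "{y}", simplified]) (rule countable_imp_null_set_lborel, simp)
    then have "AE x in lborel. Wker s Phi (x - y) * indicator K x
        \<le> ennreal M * indicator K x + ennreal M * (indicator (ball y 1) x * ennreal (norm (y - x) powr (-s)))"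
      by eventually_elim (rule pointwise)
    then have "(\<integral>\<^sup>+ x. Wker s Phi (x - y) * indicator K x \<partial>lborel)
        \<le> (\<integral>\<^sup>+ x. ennreal M * indicator K x
              + ennreal M * (indicator (ball y 1) x * ennreal (norm (y - x) powr (-s))) \<partial>lborel)"
      by (rule nn_integral_mono_AE)
    also have "\<dots> = ennreal M * emeasure lborel K
        + ennreal M * (\<integral>\<^sup>+ x. indicator (ball y 1) x * ennreal (norm (y - x) powr (-s)) \<partial>lborel)"
    proof -
      have "(\<lambda>x. indicator (ball y 1) x * ennreal (norm (y - x) powr (-s))) \<in> borel_measurable lborel"
        by (intro borel_measurable_times_ennreal borel_measurable_indicator) auto
      then show ?thesis
        using Kb by (simp add: nn_integral_add nn_integral_cmult nn_integral_cmult_indicator)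
    qed
    also have "\<dots> \<le> ennreal M * ennreal (measure lborel K) + ennreal M * ennreal (I * 1 powr (d - s))"
    proof (intro add_mono mult_left_mono)
      show "emeasure lborel K \<le> ennreal (measure lborel K)"
        using emeasure_compact_finite[OF K] by (simp add: emeasure_eq_ennreal_measure)
      have "ball_growth_on lborel {y} 1 (unit_ball_vol d) d"
        using ball_growth_on_lborel[of "{y}" 1] by (simp add: d_def)
      then show "(\<integral>\<^sup>+ x. indicator (ball y 1) x * ennreal (norm (y - x) powr (-s)) \<partial>lborel)
          \<le> ennreal (I * 1 powr (d - s))"
        unfolding I_def using s_pos sd by (intro nn_integral_ball_norm_powr_le) (auto simp: d_def)
    qed auto
    also have "\<dots> = ennreal (M * measure lborel K + M * I)"
      using M(1) I by (simp add: ennreal_mult ennreal_plus)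
    finally show ?thesis .
  qed
  then show thesis by (rule that)
qed

end

locale kernel_potential = homogeneous_kernel s Phi + finite_measure \<nu>
  for s :: real and Phi :: "real^'n \<Rightarrow> real" and \<nu> :: "(real^'n) measure" +
  assumes sets_nu: "sets \<nu> = sets borel"
begin

lemma measurable_Wker_diff: "(\<lambda>y. Wker s Phi (x - y)) \<in> borel_measurable \<nu>"
  by (simp add: measurable_cong_sets[OF sets_nu refl] measurable_compose[OF _ borel_measurable_Wker])

lemma borel_measurable_potential: "potential s Phi \<nu> \<in> borel_measurable borel"
proof -
  have "(\<lambda>p. Wker s Phi (fst p - snd p)) \<in> borel_measurable (borel \<Otimes>\<^sub>M borel)"
    unfolding borel_prod
    by (intro measurable_compose[OF _ borel_measurable_Wker] borel_measurable_continuous_onI continuous_intros)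
  then have "(\<lambda>(x, y). Wker s Phi (x - y)) \<in> borel_measurable (borel \<Otimes>\<^sub>M \<nu>)"
    by (simp add: split_def measurable_cong_sets[OF sets_pair_measure_cong[OF refl sets_nu] refl])
  then show ?thesis
    unfolding potential_def[abs_def] by (rule borel_measurable_nn_integral)
qed

text \<open>By Tonelli it suffices to bound \<open>\<integral>\<^sub>K W\<^sub>s(x - y) dx\<close> uniformly in \<open>y\<close>.\<close>
lemma nn_integral_potential_compact_finite:
  assumes "s < real CARD('n)" and K: "compact K"
  shows "(\<integral>\<^sup>+ x \<in> K. potential s Phi \<nu> x \<partial>lebesgue) < \<infinity>"
proof -
  interpret pair_sigma_finite lborel \<nu> ..
  obtain B where B: "\<And>y. (\<integral>\<^sup>+ x. Wker s Phi (x - y) * indicator K x \<partial>lborel) \<le> ennreal B"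
    using nn_integral_Wker_indicator_bounded[OF assms] by blast
  have Kb: "K \<in> sets borel" using K by (simp add: compact_imp_closed borel_closed)
  have "(\<lambda>p. Wker s Phi (fst p - snd p) * indicator K (fst p)) \<in> borel_measurable (borel \<Otimes>\<^sub>M borel)"
  proof (intro borel_measurable_times_ennreal)
    show "(\<lambda>p. indicator K (fst p) :: ennreal) \<in> borel_measurable (borel \<Otimes>\<^sub>M borel)"
      using Kb by (intro measurable_compose[OF measurable_fst]) simp
    show "(\<lambda>p. Wker s Phi (fst p - snd p)) \<in> borel_measurable (borel \<Otimes>\<^sub>M borel)"
      unfolding borel_prod
      by (intro measurable_compose[OF _ borel_measurable_Wker] borel_measurable_continuous_onI continuous_intros)
  qed
  then have meas: "case_prod (\<lambda>x y. Wker s Phi (x - y) * indicator K x) \<in> borel_measurable (lborel \<Otimes>\<^sub>M \<nu>)"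
    by (simp add: split_def measurable_cong_sets[OF sets_pair_measure_cong[OF sets_lborel sets_nu] refl])
  have "(\<integral>\<^sup>+ x \<in> K. potential s Phi \<nu> x \<partial>lebesgue)
      = (\<integral>\<^sup>+ x. (\<integral>\<^sup>+ y. Wker s Phi (x - y) * indicator K x \<partial>\<nu>) \<partial>lborel)"
    unfolding potential_def by (simp add: nn_integral_completion nn_integral_multc measurable_Wker_diff)
  also have "\<dots> = (\<integral>\<^sup>+ y. (\<integral>\<^sup>+ x. Wker s Phi (x - y) * indicator K x \<partial>lborel) \<partial>\<nu>)"
    by (rule Fubini'[OF meas, symmetric])
  also have "\<dots> \<le> (\<integral>\<^sup>+ y. ennreal B \<partial>\<nu>)"
    by (intro nn_integral_mono B)
  also have "\<dots> < \<infinity>"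
    by (simp add: less_top[symmetric] ennreal_mult_eq_top_iff)
  finally show ?thesis .
qed

definition trunc_potential :: "real \<Rightarrow> real^'n \<Rightarrow> real"
  where "trunc_potential L x = (\<integral>y. trunc_kernel L (x - y) \<partial>\<nu>)"

lemma measurable_trunc_kernel_diff:
  "0 < L \<Longrightarrow> (\<lambda>y. trunc_kernel L (x - y)) \<in> borel_measurable \<nu>"
  using borel_measurable_continuous_onI[OF continuous_trunc_kernel]
  by (simp add: measurable_cong_sets[OF sets_nu refl] measurable_compose[where f = "\<lambda>y. x - y"])

lemma continuous_trunc_potential:
  assumes L: "0 < L"
  shows "continuous_on UNIV (trunc_potential L)"
proof (subst continuous_on_sequentially, intro allI ballI impI, elim conjE)
  fix xs :: "nat \<Rightarrow> real^'n" and a assume "xs \<longlonglongrightarrow> a"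
  have "(\<lambda>i. trunc_potential L (xs i)) \<longlonglongrightarrow> trunc_potential L a"
    unfolding trunc_potential_def
  proof (rule integral_dominated_convergence[where w = "\<lambda>_. L"])
    show "AE y in \<nu>. (\<lambda>i. trunc_kernel L (xs i - y)) \<longlonglongrightarrow> trunc_kernel L (a - y)"
      using continuous_trunc_kernel[OF L] \<open>xs \<longlonglongrightarrow> a\<close>
      by (intro AE_I2 isCont_tendsto_compose[where g = "trunc_kernel L"] tendsto_intros)
         (auto simp: continuous_on_eq_continuous_at)
    show "AE y in \<nu>. norm (trunc_kernel L (xs i - y)) \<le> L" for i
      using L trunc_kernel_nonneg trunc_kernel_le by (intro AE_I2) simp
  qed (use L in \<open>auto simp: measurable_trunc_kernel_diff\<close>)
  then show "(trunc_potential L \<circ> xs) \<longlonglongrightarrow> trunc_potential L a"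
    by (simp add: comp_def)
qed

lemma potential_eq_trunc_plus_tail:
  assumes L: "0 < L"
  shows "potential s Phi \<nu> x
    = ennreal (trunc_potential L x) + (\<integral>\<^sup>+y. Wker s Phi (x - y) - ennreal L \<partial>\<nu>)"
proof -
  have "potential s Phi \<nu> x
      = (\<integral>\<^sup>+y. min (Wker s Phi (x - y)) (ennreal L) + (Wker s Phi (x - y) - ennreal L) \<partial>\<nu>)"
    unfolding potential_def by (subst ennreal_min_plus_diff[symmetric]) rule
  also have "\<dots> = (\<integral>\<^sup>+y. ennreal (trunc_kernel L (x - y)) \<partial>\<nu>)
      + (\<integral>\<^sup>+y. Wker s Phi (x - y) - ennreal L \<partial>\<nu>)"
    using L by (subst nn_integral_add)
      (auto simp: ennreal_trunc_kernel measurable_Wker_diff intro!: borel_measurable_min borel_measurable_minus_ennreal)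
  also have "(\<integral>\<^sup>+y. ennreal (trunc_kernel L (x - y)) \<partial>\<nu>) = ennreal (trunc_potential L x)"
    unfolding trunc_potential_def using L
    by (intro nn_integral_eq_integral integrable_const_bound[where B = L] AE_I2)
       (auto simp: trunc_kernel_nonneg trunc_kernel_le measurable_trunc_kernel_diff)
  finally show ?thesis .
qed

lemma tail_potential_le:
  assumes M: "0 < M" "\<And>x. x \<noteq> 0 \<Longrightarrow> Wker s Phi x \<le> ennreal (M * norm x powr (-s))"
    and L: "0 < L" and growth: "ball_growth_on \<nu> {x} ((M / L) powr (1 / s)) C \<beta>"
    and \<beta>: "s < \<beta>" and C: "0 \<le> C"
  shows "(\<integral>\<^sup>+y. Wker s Phi (x - y) - ennreal L \<partial>\<nu>)
    \<le> ennreal (M * (C * 2 powr s / (1 - 2 powr (s - \<beta>))) * ((M / L) powr (1 / s)) powr (\<beta> - s))"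
proof -
  define \<delta> where "\<delta> = (M / L) powr (1 / s)"
  have \<delta>: "0 < \<delta>" using M L by (simp add: \<delta>_def)
  have null: "emeasure \<nu> {x} = 0"
    using \<delta> s_pos \<beta> by (intro emeasure_singleton_eq_0_if_ball_growth[OF growth _ _ sets_nu]) (auto simp: \<delta>_def)
  have "AE y in \<nu>. Wker s Phi (x - y) - ennreal L
      \<le> ennreal M * (indicator (ball x \<delta>) y * ennreal (norm (x - y) powr (-s)))"
  proof (rule AE_I'[of "{x}"])
    show "{x} \<in> null_sets \<nu>" using null by (simp add: null_sets_def sets_nu)
    have "Wker s Phi (x - y) - ennreal L
        \<le> ennreal M * (indicator (ball x \<delta>) y * ennreal (norm (x - y) powr (-s)))" if "y \<noteq> x" for y
    proof -
      have "indicator (ball 0 \<delta>) (x - y) = (indicator (ball x \<delta>) y :: ennreal)"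
        by (simp add: indicator_def dist_norm norm_minus_commute)
      with Wker_minus_level_le[OF M L, of "x - y"] that show ?thesis by (simp add: \<delta>_def)
    qed
    then show "{y \<in> space \<nu>. \<not> Wker s Phi (x - y) - ennreal L
        \<le> ennreal M * (indicator (ball x \<delta>) y * ennreal (norm (x - y) powr (-s)))} \<subseteq> {x}"
      by blast
  qed
  then have "(\<integral>\<^sup>+y. Wker s Phi (x - y) - ennreal L \<partial>\<nu>)
      \<le> ennreal M * (\<integral>\<^sup>+y. indicator (ball x \<delta>) y * ennreal (norm (x - y) powr (-s)) \<partial>\<nu>)"
    by (subst nn_integral_cmult[symmetric])
       (auto simp: measurable_cong_sets[OF sets_nu refl]
             intro!: nn_integral_mono_AE borel_measurable_times_ennreal borel_measurable_indicator)
  also have "\<dots> \<le> ennreal M * ennreal (C * 2 powr s / (1 - 2 powr (s - \<beta>)) * \<delta> powr (\<beta> - s))"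
    using growth s_pos \<beta> C \<delta>
    by (intro mult_left_mono nn_integral_ball_norm_powr_le[OF sets_nu]) (auto simp: \<delta>_def)
  finally show ?thesis
    using M(1) by (simp add: \<delta>_def ennreal_mult'[symmetric] mult.assoc)
qed

lemma trunc_potential_approx:
  assumes M: "0 < M" "\<And>x. x \<noteq> 0 \<Longrightarrow> Wker s Phi x \<le> ennreal (M * norm x powr (-s))"
    and L: "0 < L" and growth: "ball_growth_on \<nu> {x} ((M / L) powr (1 / s)) C \<beta>"
    and \<beta>: "s < \<beta>" and C: "0 \<le> C"
  shows "potential s Phi \<nu> x < \<infinity>"
    and "\<bar>enn2real (potential s Phi \<nu> x) - trunc_potential L x\<bar>
      \<le> M * (C * 2 powr s / (1 - 2 powr (s - \<beta>))) * (M / L) powr ((\<beta> - s) / s)"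
proof -
  define e where "e = M * (C * 2 powr s / (1 - 2 powr (s - \<beta>))) * (M / L) powr ((\<beta> - s) / s)"
  have "2 powr (s - \<beta>) < 1" using \<beta> by (simp add: powr_less_one)
  then have "0 \<le> e" using M(1) C by (simp add: e_def)
  have tail: "(\<integral>\<^sup>+y. Wker s Phi (x - y) - ennreal L \<partial>\<nu>) \<le> ennreal e"
    using tail_potential_le[OF M L growth \<beta> C] by (simp add: e_def powr_powr)
  have "0 \<le> trunc_potential L x"
    unfolding trunc_potential_def by (intro integral_nonneg_AE AE_I2 trunc_kernel_nonneg)
  moreover have "(\<integral>\<^sup>+y. Wker s Phi (x - y) - ennreal L \<partial>\<nu>) < \<infinity>"
    using tail by (simp add: le_less_trans)
  moreover have "enn2real (\<integral>\<^sup>+y. Wker s Phi (x - y) - ennreal L \<partial>\<nu>) \<le> e"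
    using \<open>0 \<le> e\<close> tail by (rule enn2real_leI)
  ultimately show "potential s Phi \<nu> x < \<infinity>" "\<bar>enn2real (potential s Phi \<nu> x) - trunc_potential L x\<bar> \<le> e"
    using potential_eq_trunc_plus_tail[OF L, of x] by (simp_all add: enn2real_plus)
qed

text \<open>The truncated potentials are continuous, and the growth bound controls the part of the
  kernel above level \<open>L\<close> uniformly on \<open>U\<close>, so the potential is a uniform limit on \<open>U\<close>.\<close>
lemma potential_continuous_on:
  assumes growth: "ball_growth_on \<nu> U r0 C \<beta>" and \<beta>: "s < \<beta>" and r0: "0 < r0" and C: "0 \<le> C"
  shows "\<forall>x\<in>U. potential s Phi \<nu> x < \<infinity>"
    and "continuous_on U (\<lambda>x. enn2real (potential s Phi \<nu> x))"
proof -
  obtain M where M: "0 < M" "\<And>x. x \<noteq> 0 \<Longrightarrow> Wker s Phi x \<le> ennreal (M * norm x powr (-s))"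
    using Wker_upper_bound by blast
  define K where "K = M * (C * 2 powr s / (1 - 2 powr (s - \<beta>)))"
  define e where "e L = K * (M / L) powr ((\<beta> - s) / s)" for L
  define L0 where "L0 = max 1 (M / r0 powr s)"
  have approx: "potential s Phi \<nu> x < \<infinity> \<and> \<bar>enn2real (potential s Phi \<nu> x) - trunc_potential L x\<bar> \<le> e L"
    if x: "x \<in> U" and L: "L0 \<le> L" for x L
  proof -
    have L0: "0 < L" using L by (simp add: L0_def)
    have "M / L \<le> r0 powr s"
      using L M(1) r0 by (simp add: L0_def divide_le_eq mult.commute)
    then have "(M / L) powr (1 / s) \<le> (r0 powr s) powr (1 / s)"
      using M(1) L0 s_pos by (intro powr_mono2) auto
    then have "ball_growth_on \<nu> {x} ((M / L) powr (1 / s)) C \<beta>"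
      using r0 s_pos x by (intro ball_growth_on_mono[OF growth]) (auto simp: powr_powr)
    from trunc_potential_approx[OF M L0 this \<beta> C] show ?thesis by (simp add: e_def K_def)
  qed
  have "((\<lambda>L. K * (M / L) powr ((\<beta> - s) / s)) \<longlongrightarrow> K * 0) at_top"
    using s_pos \<beta> M(1)
    by (intro tendsto_mult tendsto_const tendsto_zero_powrI[where b = "(\<beta> - s) / s"]
        real_tendsto_divide_at_top[OF tendsto_const filterlim_ident])
       (auto intro!: eventually_mono[OF eventually_gt_at_top[of 0]])
  then have "(e \<longlongrightarrow> 0) at_top" by (simp add: e_def[abs_def])
  then have "uniform_limit U trunc_potential (\<lambda>x. enn2real (potential s Phi \<nu> x)) at_top"
    unfolding uniform_limit_iff
  proof (intro allI impI)
    fix \<epsilon> :: real assume "0 < \<epsilon>"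
    with \<open>(e \<longlongrightarrow> 0) at_top\<close> have "\<forall>\<^sub>F L in at_top. e L < \<epsilon>" by (rule order_tendstoD)
    with eventually_ge_at_top[of L0]
    show "\<forall>\<^sub>F L in at_top. \<forall>x\<in>U. dist (trunc_potential L x) (enn2real (potential s Phi \<nu> x)) < \<epsilon>"
      by eventually_elim (use approx in \<open>force simp: dist_real_def abs_minus_commute\<close>)
  qed
  moreover have "\<forall>\<^sub>F L in at_top. continuous_on U (trunc_potential L)"
    using eventually_gt_at_top[of 0]
    by eventually_elim (auto intro: continuous_on_subset[OF continuous_trunc_potential])
  ultimately show "continuous_on U (\<lambda>x. enn2real (potential s Phi \<nu> x))"
    by (intro uniform_limit_theorem) auto
  show "\<forall>x\<in>U. potential s Phi \<nu> x < \<infinity>"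
    using approx[OF _ order.refl] by blast
qed

lemma potential_finite_isCont:
  assumes growth: "ball_growth_on \<nu> V r0 C \<beta>" and V: "open V" "x \<in> V"
    and "s < \<beta>" "0 < r0" "0 \<le> C"
  shows "potential s Phi \<nu> x < \<infinity>" and "isCont (\<lambda>x. enn2real (potential s Phi \<nu> x)) x"
proof -
  note pc = potential_continuous_on[OF growth \<open>s < \<beta>\<close> \<open>0 < r0\<close> \<open>0 \<le> C\<close>]
  from pc(1) V(2) show "potential s Phi \<nu> x < \<infinity>" ..
  from pc(2) V show "isCont (\<lambda>x. enn2real (potential s Phi \<nu> x)) x"
    by (simp add: continuous_on_eq_continuous_at)
qed

end

section \<open>The measures \<open>mu_q\<close>\<close>

lemma emeasure_lborel_scaleR_vimage:
  fixes S :: "(real^'n) set"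
  assumes S: "S \<in> sets borel" and a: "0 < a"
  shows "emeasure lborel ((\<lambda>x. (1 / a) *\<^sub>R x) -` S) = ennreal (a ^ CARD('n)) * emeasure lborel S"
proof -
  define T where "T = (\<lambda>x::real^'n. 0 + (1 / a) *\<^sub>R x)"
  have T: "T \<in> borel \<rightarrow>\<^sub>M borel"
    unfolding T_def by (intro borel_measurable_continuous_onI continuous_intros)
  have "lborel = density (distr lborel borel T) (\<lambda>_. \<bar>1 / a\<bar> ^ DIM(real^'n))"
    unfolding T_def using a by (intro lborel_affine) simp
  then have "emeasure lborel S = emeasure (density (distr lborel borel T) (\<lambda>_. \<bar>1 / a\<bar> ^ DIM(real^'n))) S"
    by simp
  also have "\<dots> = ennreal ((1 / a) ^ CARD('n)) * emeasure lborel ((\<lambda>x. (1 / a) *\<^sub>R x) -` S)"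
    using S T a by (simp add: emeasure_density nn_integral_cmult_indicator emeasure_distr T_def)
  finally have "ennreal (a ^ CARD('n)) * emeasure lborel S
      = ennreal (a ^ CARD('n)) * ennreal ((1 / a) ^ CARD('n)) * emeasure lborel ((\<lambda>x. (1 / a) *\<^sub>R x) -` S)"
    by (simp add: mult.assoc)
  also have "ennreal (a ^ CARD('n)) * ennreal ((1 / a) ^ CARD('n)) = 1"
    using a by (simp add: ennreal_mult[symmetric] power_mult_distrib[symmetric])
  finally show ?thesis by simp
qed

definition unit_cone :: "(real^'n) set \<Rightarrow> (real^'n) set" where
  "unit_cone A = {x \<in> cball 0 1. sgn x \<in> A}"

lemma sets_unit_cone: "A \<in> sets borel \<Longrightarrow> unit_cone A \<in> sets borel"
proof -
  assume A: "A \<in> sets borel"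
  have "unit_cone A = cball 0 1 \<inter> sgn -` A" by (auto simp: unit_cone_def)
  moreover have "sgn -` A \<in> sets borel"
    using measurable_sets[OF borel_measurable_sgn A] by simp
  ultimately show ?thesis by simp
qed

lemma unit_cone_subset: "unit_cone A \<subseteq> cball 0 1" by (auto simp: unit_cone_def)

lemma scaleR_vimage_unit_cone:
  fixes A :: "(real^'n) set"
  assumes "0 < a" "a \<le> 1"
  shows "(\<lambda>x. (1 / a) *\<^sub>R x) -` unit_cone A = unit_cone A \<inter> cball 0 a"
proof (rule set_eqI)
  fix x :: "real^'n"
  have "sgn ((1 / a) *\<^sub>R x) = sgn x" using assms by (simp add: sgn_scaleR)
  moreover have "norm ((1 / a) *\<^sub>R x) \<le> 1 \<longleftrightarrow> norm x \<le> a" using assms by (simp add: field_simps)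
  moreover have "norm x \<le> a \<Longrightarrow> norm x \<le> 1" using assms by simp
  ultimately show "x \<in> (\<lambda>x. (1 / a) *\<^sub>R x) -` unit_cone A \<longleftrightarrow> x \<in> unit_cone A \<inter> cball 0 a"
    by (auto simp: unit_cone_def)
qed

lemma measure_unit_cone_Diff_cball:
  fixes A :: "(real^'n) set"
  assumes A: "A \<in> sets borel" and a: "0 < a" "a \<le> 1"
  shows "measure lborel (unit_cone A - cball 0 a) = (1 - a ^ CARD('n)) * measure lborel (unit_cone A)"
proof -
  have cb: "unit_cone A \<in> sets borel" by (rule sets_unit_cone[OF A])
  have fin: "emeasure lborel (unit_cone A) \<noteq> \<infinity>"
  proof -
    have "emeasure lborel (unit_cone A) \<le> emeasure lborel (cball (0::real^'n) 1)"
      by (rule emeasure_mono[OF unit_cone_subset]) simp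
    then show ?thesis using emeasure_lborel_cball_finite[of "0::real^'n" 1] by (auto simp: top_unique)
  qed
  have e: "emeasure lborel (unit_cone A \<inter> cball 0 a) = ennreal (a ^ CARD('n)) * emeasure lborel (unit_cone A)"
    using emeasure_lborel_scaleR_vimage[OF cb a(1)] scaleR_vimage_unit_cone[OF a, of A] by simp
  have "measure lborel (unit_cone A \<inter> cball 0 a) = a ^ CARD('n) * measure lborel (unit_cone A)"
    using e fin a by (simp add: measure_def enn2real_mult)
  moreover have "unit_cone A - cball 0 a = unit_cone A - (unit_cone A \<inter> cball 0 a)" by auto
  moreover have "measure lborel (unit_cone A - (unit_cone A \<inter> cball 0 a))
      = measure lborel (unit_cone A) - measure lborel (unit_cone A \<inter> cball 0 a)"
    using fin cb by (intro measure_Diff) auto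
  ultimately show ?thesis by (simp add: algebra_simps)
qed

lemma measure_lborel_mono:
  "A \<subseteq> B \<Longrightarrow> B \<in> sets borel \<Longrightarrow> emeasure lborel B < \<infinity>
    \<Longrightarrow> measure lborel A \<le> measure lborel B"
  unfolding measure_def by (intro enn2real_mono emeasure_mono) auto

lemma dist_sgn_less:
  assumes "1 - w < norm y" "norm y \<le> 1" "w \<le> 1"
  shows "dist y (sgn y) < w"
proof -
  have "y \<noteq> 0" using assms by auto
  then have "y - sgn y = (1 - 1 / norm y) *\<^sub>R y" by (simp add: sgn_div_norm algebra_simps inverse_eq_divide)
  then have "dist y (sgn y) = \<bar>1 - 1 / norm y\<bar> * norm y" by (simp add: dist_norm)
  also have "\<dots> = 1 - norm y" using assms \<open>y \<noteq> 0\<close> by (simp add: abs_mult[symmetric] field_simps)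
  finally show ?thesis using assms by simp
qed

text \<open>For \<open>r < 1\<close> the part of the cone outside \<open>cball 0 (1 - r)\<close> lies in \<open>ball u (2 * r)\<close> and
  carries the fraction \<open>1 - (1 - r)^d \<ge> r\<close> of the volume of the cone.\<close>
lemma measure_unit_cone_ball_le:
  fixes u :: "real^'n"
  assumes r: "0 < r"
  shows "measure lborel (unit_cone (ball u r)) \<le> unit_ball_vol (CARD('n)) * 2 ^ CARD('n) * r ^ (CARD('n) - 1)"
proof -
  define d where "d = CARD('n)"
  have d1: "1 \<le> d" by (simp add: d_def Suc_le_eq)
  have "measure lborel (unit_cone (ball u r)) \<le> measure lborel (cball (0::real^'n) 1)"
    by (rule measure_lborel_mono[OF unit_cone_subset]) (simp, rule emeasure_lborel_cball_finite)
  then have V1: "measure lborel (unit_cone (ball u r)) \<le> unit_ball_vol d" by (simp add: content_cball d_def)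
  show ?thesis
  proof (cases "1 \<le> r")
    case True
    then have "1 \<le> (2::real) ^ d * r ^ (d - 1)"
      by (metis mult_mono' one_le_numeral one_le_power mult_1 zero_le_one)
    then have "unit_ball_vol d \<le> unit_ball_vol d * (2 ^ d * r ^ (d - 1))"
      by (simp add: mult_le_cancel_left1 not_less[symmetric])
    from order_trans[OF V1 this] show ?thesis by (simp add: d_def mult.assoc)
  next
    case False
    have sub: "unit_cone (ball u r) - cball 0 (1 - r) \<subseteq> ball u (2 * r)"
    proof
      fix x assume "x \<in> unit_cone (ball u r) - cball 0 (1 - r)"
      then have "dist u (sgn x) < r" "dist (sgn x) x < r"
        using False dist_sgn_less[of r x] by (auto simp: unit_cone_def dist_commute)
      then show "x \<in> ball u (2 * r)" using dist_triangle[of u x "sgn x"] by simp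
    qed
    have "(1 - (1 - r) ^ d) * measure lborel (unit_cone (ball u r))
        = measure lborel (unit_cone (ball u r) - cball 0 (1 - r))"
      using measure_unit_cone_Diff_cball[of "ball u r" "1 - r"] False r by (simp add: d_def)
    also have "\<dots> \<le> measure lborel (ball u (2 * r))"
      by (rule measure_lborel_mono[OF sub]) (simp, rule emeasure_lborel_ball_finite)
    also have "\<dots> = unit_ball_vol d * (2 * r) ^ d" using r by (simp add: content_ball d_def)
    also have "\<dots> = r * (unit_ball_vol d * 2 ^ d * r ^ (d - 1))"
      using d1 by (simp add: power_mult_distrib power_eq_if[of r d] algebra_simps)
    finally have "(1 - (1 - r) ^ d) * measure lborel (unit_cone (ball u r))
        \<le> r * (unit_ball_vol d * 2 ^ d * r ^ (d - 1))" .
    moreover have "r \<le> 1 - (1 - r) ^ d"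
      using power_decreasing[OF d1, of "1 - r"] False r by simp
    ultimately have "r * measure lborel (unit_cone (ball u r)) \<le> r * (unit_ball_vol d * 2 ^ d * r ^ (d - 1))"
      by (meson measure_nonneg mult_right_mono order_trans)
    then show ?thesis using r by (simp add: d_def)
  qed
qed

lemma sets_sphere_prob [simp]: "sets (sphere_prob :: (real^'n) measure) = sets borel"
  by (simp add: sphere_prob_def)

lemma emeasure_sphere_prob:
  fixes B :: "(real^'n) set"
  assumes B: "B \<in> sets borel"
  shows "emeasure sphere_prob B = ennreal (measure lborel (unit_cone B) / unit_ball_vol (CARD('n)))"
proof -
  have "emeasure sphere_prob B = emeasure (uniform_measure lborel (cball (0::real^'n) 1)) (sgn -` B)"
    using B by (simp add: sphere_prob_def emeasure_distr)
  also have "\<dots> = emeasure lborel (cball 0 1 \<inter> sgn -` B) / emeasure lborel (cball (0::real^'n) 1)"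
    using measurable_sets[OF borel_measurable_sgn B] by (subst emeasure_uniform_measure) auto
  also have "cball 0 1 \<inter> sgn -` B = unit_cone B" by (auto simp: unit_cone_def)
  also have "emeasure lborel (unit_cone B) = ennreal (measure lborel (unit_cone B))"
  proof -
    have "emeasure lborel (unit_cone B) \<le> emeasure lborel (cball (0::real^'n) 1)"
      by (rule emeasure_mono[OF unit_cone_subset]) simp
    then show ?thesis using emeasure_lborel_cball_finite[of "0::real^'n" 1]
      by (intro emeasure_eq_ennreal_measure) (auto simp: top_unique)
  qed
  also have "emeasure lborel (cball (0::real^'n) 1) = ennreal (unit_ball_vol (CARD('n)))"
    by (simp add: emeasure_cball)
  finally show ?thesis by (simp add: divide_ennreal)
qed

lemma finite_sphere_prob: "finite_measure (sphere_prob :: (real^'n) measure)"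
proof (rule finite_measureI)
  have "space (sphere_prob :: (real^'n) measure) = UNIV" by (simp add: sphere_prob_def)
  then show "emeasure (sphere_prob :: (real^'n) measure) (space sphere_prob) \<noteq> \<infinity>"
    by (simp add: emeasure_sphere_prob)
qed

lemma ball_growth_on_sphere_prob:
  "ball_growth_on (sphere_prob :: (real^'n) measure) U r0 (2 ^ CARD('n)) (real CARD('n) - 1)"
  unfolding ball_growth_on_def
proof (intro ballI allI impI)
  fix u :: "real^'n" and r :: real assume r: "0 < r"
  have "measure lborel (unit_cone (ball u r)) / unit_ball_vol (CARD('n)) \<le> 2 ^ CARD('n) * r ^ (CARD('n) - 1)"
    using measure_unit_cone_ball_le[OF r, of u] by (simp add: divide_le_eq mult.commute mult.left_commute)
  also have "r ^ (CARD('n) - 1) = r powr (real CARD('n) - 1)"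
    using r by (simp add: powr_realpow[symmetric] of_nat_diff Suc_le_eq)
  finally show "emeasure sphere_prob (ball u r) \<le> ennreal (2 ^ CARD('n) * r powr (real CARD('n) - 1))"
    by (simp add: emeasure_sphere_prob ennreal_leI)
qed

lemma emeasure_sphere_prob_eq_0:
  fixes B :: "(real^'n) set"
  assumes "B \<in> sets borel" "B \<inter> sphere 0 1 = {}"
  shows "emeasure sphere_prob B = 0"
proof -
  have "unit_cone B \<subseteq> {0}"
    using assms by (auto simp: unit_cone_def norm_sgn split: if_splits)
  then have "measure lborel (unit_cone B) \<le> measure lborel {0::real^'n}"
    by (intro measure_lborel_mono) auto
  then have "measure lborel (unit_cone B) = 0" by (simp add: measure_nonneg antisym)
  then show ?thesis using assms(1) by (simp add: emeasure_sphere_prob)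
qed

text \<open>Radial projection moves the shell \<open>1 - w < |y| \<le> 1\<close> by less than \<open>w\<close>, so its part in
  \<open>ball z r\<close> lies in the cone over \<open>ball z (2 * r)\<close>, of which it is the fraction
  \<open>1 - (1 - w)^d \<le> d w\<close>.\<close>
lemma measure_ball_inter_shell_le:
  fixes z :: "real^'n"
  assumes w: "0 < w" "w \<le> r" "w < 1"
  shows "measure lborel (ball z r \<inter> (cball 0 1 - cball 0 (1 - w)))
     \<le> real CARD('n) * unit_ball_vol (CARD('n)) * 4 ^ CARD('n) * r ^ (CARD('n) - 1) * w"
proof -
  define d where "d = CARD('n)"
  have sub: "ball z r \<inter> (cball 0 1 - cball 0 (1 - w)) \<subseteq> unit_cone (ball z (2 * r)) - cball 0 (1 - w)"
  proof
    fix y assume "y \<in> ball z r \<inter> (cball 0 1 - cball 0 (1 - w))"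
    moreover from this have "dist z (sgn y) < 2 * r"
      using dist_triangle[of z "sgn y" y] dist_sgn_less[of w y] w by auto
    ultimately show "y \<in> unit_cone (ball z (2 * r)) - cball 0 (1 - w)" by (auto simp: unit_cone_def)
  qed
  have "measure lborel (ball z r \<inter> (cball 0 1 - cball 0 (1 - w)))
      \<le> measure lborel (unit_cone (ball z (2 * r)) - cball 0 (1 - w))"
  proof (rule measure_lborel_mono[OF sub])
    have "emeasure lborel (unit_cone (ball z (2 * r)) - cball 0 (1 - w)) \<le> emeasure lborel (cball (0::real^'n) 1)"
      by (rule emeasure_mono) (auto simp: unit_cone_def)
    then show "emeasure lborel (unit_cone (ball z (2 * r)) - cball 0 (1 - w)) < \<infinity>"
      using emeasure_lborel_cball_finite[of "0::real^'n" 1] by (simp add: le_less_trans)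
  qed (intro sets.Diff sets_unit_cone, auto)
  also have "\<dots> = (1 - (1 - w) ^ d) * measure lborel (unit_cone (ball z (2 * r)))"
    using measure_unit_cone_Diff_cball[of "ball z (2 * r)" "1 - w"] w by (simp add: d_def)
  also have "\<dots> \<le> (real d * w) * (unit_ball_vol d * 2 ^ d * (2 * r) ^ (d - 1))"
  proof (rule mult_mono)
    show "1 - (1 - w) ^ d \<le> real d * w" using Bernoulli_inequality[of "- w" d] w by simp
    show "measure lborel (unit_cone (ball z (2 * r))) \<le> unit_ball_vol d * 2 ^ d * (2 * r) ^ (d - 1)"
      using measure_unit_cone_ball_le[of "2 * r" z] w by (simp add: d_def)
  qed (use w in auto)
  also have "\<dots> \<le> real d * unit_ball_vol d * 4 ^ d * r ^ (d - 1) * w"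
  proof -
    have "(2::real) ^ d * 2 ^ (d - 1) \<le> 2 ^ d * 2 ^ d" by (intro mult_left_mono power_increasing) auto
    also have "\<dots> = 4 ^ d" by (simp add: power_mult_distrib[symmetric])
    finally have "(2::real) ^ d * 2 ^ (d - 1) \<le> 4 ^ d" .
    then show ?thesis using w by (simp add: power_mult_distrib mult_left_mono mult_right_mono mult.assoc)
  qed
  finally show ?thesis by (simp add: d_def)
qed

lemma borel_measurable_ball_dens [measurable]: "ball_dens q \<in> borel_measurable (borel :: (real^'n) measure)"
  unfolding ball_dens_def[abs_def]
  by (intro borel_measurable_times_ennreal borel_measurable_indicator
      measurable_compose[OF _ measurable_ennreal] powr_real_measurable
      borel_measurable_continuous_onI continuous_intros) auto

lemma ball_dens_le_1:
  assumes "real CARD('n) \<le> q"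
  shows "ball_dens q (y::real^'n) \<le> 1"
proof (cases "norm y \<le> 1")
  case True
  then have "(1 - norm y ^ 2) powr ((q - real CARD('n)) / 2) \<le> 1"
    using assms by (intro powr_le1) (auto simp: power_le_one)
  with True show ?thesis by (simp add: ball_dens_def ennreal_leI)
qed (simp add: ball_dens_def)

lemma ball_dens_le_off_sphere:
  assumes \<delta>: "0 < \<delta>" "\<delta> \<le> \<bar>1 - norm y\<bar>"
  shows "ball_dens q (y::real^'n) \<le> ennreal (max 1 (\<delta> powr ((q - real CARD('n)) / 2)))"
proof (cases "norm y < 1")
  case True
  define \<alpha> where "\<alpha> = (q - real CARD('n)) / 2"
  have "\<delta> \<le> 1 - norm y" using True \<delta> by simp
  also have "\<dots> \<le> 1 - norm y ^ 2" using True by (simp add: power2_eq_square mult_left_le_one_le)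
  finally have \<delta>y: "\<delta> \<le> 1 - norm y ^ 2" .
  have "(1 - norm y ^ 2) powr \<alpha> \<le> max 1 (\<delta> powr \<alpha>)"
  proof (cases "0 \<le> \<alpha>")
    case True
    then have "(1 - norm y ^ 2) powr \<alpha> \<le> 1"
      using \<open>norm y < 1\<close> by (intro powr_le1) (auto simp: power_le_one abs_le_iff)
    then show ?thesis by simp
  next
    case False
    then have "(1 - norm y ^ 2) powr \<alpha> \<le> \<delta> powr \<alpha>" using \<delta>y \<delta> by (intro powr_mono2') auto
    then show ?thesis by simp
  qed
  with True show ?thesis by (simp add: ball_dens_def \<alpha>_def ennreal_leI)
next
  case False
  with \<delta> have "1 < norm y" by auto
  then show ?thesis by (simp add: ball_dens_def)
qed

lemma ball_growth_on_density_bounded: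
  fixes f :: "'a::euclidean_space \<Rightarrow> ennreal"
  assumes [measurable]: "f \<in> borel_measurable borel"
    and bounded: "\<And>y. y \<in> V \<Longrightarrow> f y \<le> ennreal B" and "0 \<le> B"
    and balls: "\<And>z. z \<in> U \<Longrightarrow> ball z r0 \<subseteq> V"
  shows "ball_growth_on (density lborel f) U r0 (B * unit_ball_vol DIM('a)) DIM('a)"
  unfolding ball_growth_on_def
proof (intro ballI allI impI)
  fix z r assume "z \<in> U" "0 < r" "r \<le> r0"
  then have "ball z r \<subseteq> V" using balls by fastforce
  then have "emeasure (density lborel f) (ball z r) \<le> (\<integral>\<^sup>+y. ennreal B * indicator (ball z r) y \<partial>lborel)"
    by (auto simp: emeasure_density indicator_def bounded intro!: nn_integral_mono)
  also have "\<dots> = ennreal (B * unit_ball_vol DIM('a) * r powr DIM('a))"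
    using \<open>0 \<le> B\<close> \<open>0 < r\<close>
    by (simp add: nn_integral_cmult_indicator emeasure_ball powr_realpow ennreal_mult mult.assoc)
  finally show "emeasure (density lborel f) (ball z r) \<le> ennreal (B * unit_ball_vol DIM('a) * r powr DIM('a))" .
qed

lemma dyadic_shell_powr_eq:
  fixes r \<alpha> c :: real
  assumes r: "0 < r" and d: "1 \<le> d"
  shows "(r / 2 ^ Suc k) powr \<alpha> * (c * r ^ (d - 1) * (r / 2 ^ k))
    = c * 2 powr (-\<alpha>) * r powr (real d + \<alpha>) * (2 powr (-(1 + \<alpha>))) ^ k"
proof -
  define p where "p = (2::real) powr \<alpha>"
  have p: "0 < p" by (simp add: p_def)
  have "(2 ^ Suc k :: real) = 2 powr real (Suc k)" by (rule powr_realpow[symmetric]) simp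
  then have "(2 ^ Suc k :: real) powr \<alpha> = p powr real (Suc k)"
    by (simp add: p_def powr_powr mult.commute)
  also have "\<dots> = p ^ Suc k" using p by (rule powr_realpow)
  finally have e1: "(r / 2 ^ Suc k) powr \<alpha> = r powr \<alpha> / p ^ Suc k"
    using r by (simp add: powr_divide)
  have e2: "2 powr (-\<alpha>) = 1 / p" by (simp add: p_def powr_minus_divide)
  have e3: "2 powr (-(1 + \<alpha>)) = 1 / (2 * p)"
    unfolding powr_minus_divide by (simp add: p_def powr_add)
  have e4: "r powr (real d + \<alpha>) = r powr \<alpha> * r ^ (d - 1) * r"
  proof -
    have "r powr (real d + \<alpha>) = r powr (\<alpha> + (real d - 1) + 1)" by (simp add: algebra_simps)
    also have "\<dots> = r powr \<alpha> * r powr (real d - 1) * r powr 1" by (simp only: powr_add)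
    finally show ?thesis using r d by (simp add: powr_realpow[symmetric] of_nat_diff)
  qed
  show ?thesis unfolding e1 e2 e3 e4 using p
    by (simp add: field_simps power_mult_distrib power_divide)
qed

lemma ball_dens_indicator_le_shells:
  fixes q r :: real and y z :: "real^'n"
  defines "\<alpha> \<equiv> (q - real CARD('n)) / 2"
  assumes \<alpha>: "\<alpha> < 0" and r: "0 < r"
  shows "ball_dens q y * indicator (ball z r) y
    \<le> ennreal (r powr \<alpha>) * indicator (ball z r) y
      + (\<Sum>k. ennreal ((r / 2 ^ Suc k) powr \<alpha>)
              * indicator (ball z r \<inter> (cball 0 1 - cball 0 (1 - r / 2 ^ k))) y)"
    (is "_ \<le> ?near + ?shells")
proof (cases "y \<in> ball z r \<and> norm y < 1")
  case True
  define t where "t = 1 - norm y"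
  have t: "0 < t" using True by (simp add: t_def)
  have "norm y ^ 2 \<le> norm y" using True by (simp add: power2_eq_square mult_left_le_one_le)
  then have "(1 - norm y ^ 2) powr \<alpha> \<le> t powr \<alpha>"
    using \<alpha> True by (intro powr_mono2') (auto simp: t_def)
  then have dens: "ball_dens q y * indicator (ball z r) y \<le> ennreal (t powr \<alpha>)"
    using True by (simp add: ball_dens_def \<alpha>_def ennreal_leI)
  show ?thesis
  proof (cases "r \<le> t")
    case True
    then have "ennreal (t powr \<alpha>) \<le> ennreal (r powr \<alpha>)"
      using r \<alpha> t by (intro ennreal_leI powr_mono2') auto
    then have "ball_dens q y * indicator (ball z r) y \<le> ?near"
      using order_trans[OF dens] \<open>y \<in> ball z r \<and> norm y < 1\<close> by simp
    then show ?thesis by (rule add_increasing2[OF zero_le])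
  next
    case False
    then obtain k where k: "r / 2 ^ Suc k \<le> t" "t < r / 2 ^ k"
      using dyadic_interval_exists[of t r] t by auto
    have "ennreal (t powr \<alpha>) \<le> ennreal ((r / 2 ^ Suc k) powr \<alpha>)"
      using k r \<alpha> t by (intro ennreal_leI powr_mono2') auto
    moreover have "y \<in> ball z r \<inter> (cball 0 1 - cball 0 (1 - r / 2 ^ k))"
      using k True by (auto simp: t_def)
    ultimately have "ball_dens q y * indicator (ball z r) y
        \<le> ennreal ((r / 2 ^ Suc k) powr \<alpha>) * indicator (ball z r \<inter> (cball 0 1 - cball 0 (1 - r / 2 ^ k))) y"
      using order_trans[OF dens] by simp
    also have "\<dots> \<le> ?shells" by (rule ennreal_le_suminf)
    finally show ?thesis by (rule add_increasing[OF zero_le])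
  qed
next
  case False
  have "ball_dens q y * indicator (ball z r) y = 0"
  proof (cases "y \<in> ball z r")
    case True
    with False have "1 \<le> norm y" by auto
    then show ?thesis by (cases "norm y = 1") (auto simp: ball_dens_def)
  qed simp
  then show ?thesis by (simp only: zero_le)
qed

lemma emeasure_density_ball_dens_le_shells:
  fixes q r :: real and z :: "real^'n"
  defines "\<alpha> \<equiv> (q - real CARD('n)) / 2"
    and "Sh \<equiv> \<lambda>k::nat. ball z r \<inter> (cball 0 1 - cball 0 (1 - r / 2 ^ k))"
  assumes \<alpha>: "\<alpha> < 0" and r: "0 < r"
  shows "emeasure (density lborel (ball_dens q)) (ball z r)
    \<le> ennreal (r powr \<alpha>) * emeasure lborel (ball z r)
      + (\<Sum>k. ennreal ((r / 2 ^ Suc k) powr \<alpha>) * emeasure lborel (Sh k))"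
proof -
  define c where "c k = (r / 2 ^ Suc k) powr \<alpha>" for k :: nat
  have Sh: "Sh k \<in> sets borel" for k by (simp add: Sh_def)
  then have meas: "(\<lambda>y. ennreal (c k) * indicator (Sh k) y) \<in> borel_measurable lborel" for k
    by (auto intro!: borel_measurable_times_ennreal)
  have m1: "(\<lambda>y. ennreal (r powr \<alpha>) * indicator (ball z r) y) \<in> borel_measurable lborel"
    by (intro borel_measurable_times_ennreal borel_measurable_indicator) simp_all
  have m2: "(\<lambda>y. \<Sum>k. ennreal (c k) * indicator (Sh k) y) \<in> borel_measurable lborel"
    by (rule borel_measurable_suminf_order) (rule meas)
  have "emeasure (density lborel (ball_dens q)) (ball z r)
      = (\<integral>\<^sup>+y. ball_dens q y * indicator (ball z r) y \<partial>lborel)"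
    by (simp add: emeasure_density)
  also have "\<dots> \<le> (\<integral>\<^sup>+y. ennreal (r powr \<alpha>) * indicator (ball z r) y
      + (\<Sum>k. ennreal (c k) * indicator (Sh k) y) \<partial>lborel)"
    unfolding Sh_def c_def \<alpha>_def
    by (intro nn_integral_mono ball_dens_indicator_le_shells) (use \<alpha> r in \<open>simp_all add: \<alpha>_def\<close>)
  also have "\<dots> = (\<integral>\<^sup>+y. ennreal (r powr \<alpha>) * indicator (ball z r) y \<partial>lborel)
      + (\<integral>\<^sup>+y. (\<Sum>k. ennreal (c k) * indicator (Sh k) y) \<partial>lborel)"
    by (rule nn_integral_add[OF m1 m2])
  also have "(\<integral>\<^sup>+y. (\<Sum>k. ennreal (c k) * indicator (Sh k) y) \<partial>lborel)
      = (\<Sum>k. \<integral>\<^sup>+y. ennreal (c k) * indicator (Sh k) y \<partial>lborel)"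
    by (rule nn_integral_suminf) (rule meas)
  finally show ?thesis using Sh by (simp add: nn_integral_cmult_indicator c_def)
qed

lemma emeasure_dyadic_shell_le:
  fixes r \<alpha> :: real and z :: "real^'n"
  defines "Csh \<equiv> real CARD('n) * unit_ball_vol (CARD('n)) * 4 ^ CARD('n)"
  assumes r: "0 < r" "r \<le> 1/2"
  shows "ennreal ((r / 2 ^ Suc k) powr \<alpha>) * emeasure lborel (ball z r \<inter> (cball 0 1 - cball 0 (1 - r / 2 ^ k)))
    \<le> ennreal (Csh * 2 powr (-\<alpha>) * r powr (real CARD('n) + \<alpha>) * (2 powr (-(1 + \<alpha>))) ^ k)"
proof -
  define d where "d = CARD('n)"
  define Sh where "Sh = ball z r \<inter> (cball 0 1 - cball 0 (1 - r / 2 ^ k))"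
  have "emeasure lborel Sh = ennreal (measure lborel Sh)"
    using emeasure_mono[of Sh "ball z r" lborel] emeasure_lborel_ball_finite[of z r]
    by (intro emeasure_eq_ennreal_measure) (auto simp: Sh_def top_unique)
  moreover have "measure lborel Sh \<le> Csh * r ^ (d - 1) * (r / 2 ^ k)"
  proof -
    have "0 < r / 2 ^ k" "r / 2 ^ k \<le> r" using r by (auto simp: field_simps)
    moreover from this have "r / 2 ^ k < 1" using r by linarith
    ultimately show ?thesis
      unfolding Sh_def Csh_def d_def by (rule measure_ball_inter_shell_le)
  qed
  ultimately have "ennreal ((r / 2 ^ Suc k) powr \<alpha>) * emeasure lborel Sh
      \<le> ennreal ((r / 2 ^ Suc k) powr \<alpha>) * ennreal (Csh * r ^ (d - 1) * (r / 2 ^ k))"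
    by (auto intro!: mult_left_mono ennreal_leI)
  also have "\<dots> = ennreal ((r / 2 ^ Suc k) powr \<alpha> * (Csh * r ^ (d - 1) * (r / 2 ^ k)))"
    by (rule ennreal_mult'[symmetric]) simp
  also have "(r / 2 ^ Suc k) powr \<alpha> * (Csh * r ^ (d - 1) * (r / 2 ^ k))
      = Csh * 2 powr (-\<alpha>) * r powr (real d + \<alpha>) * (2 powr (-(1 + \<alpha>))) ^ k"
    using r by (intro dyadic_shell_powr_eq) (auto simp: d_def Suc_le_eq)
  finally show ?thesis by (simp add: Sh_def d_def)
qed

text \<open>The density blows up like \<open>dist y (sphere 0 1) powr \<alpha>\<close>; the dyadic shells of
  \<open>ball z r\<close> at distance about \<open>r/2^k\<close> from the sphere have volume \<open>O(r^(d-1) r/2^k)\<close>,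
  and \<open>\<alpha> > -1\<close> makes the resulting series converge.\<close>
lemma ball_growth_on_density_ball_dens:
  fixes q :: real
  defines "\<alpha> \<equiv> (q - real CARD('n)) / 2"
    and "Csh \<equiv> real CARD('n) * unit_ball_vol (CARD('n)) * 4 ^ CARD('n)"
  assumes \<alpha>: "-1 < \<alpha>" "\<alpha> < 0"
  shows "ball_growth_on (density lborel (ball_dens q) :: (real^'n) measure) U (1/2)
    (unit_ball_vol (CARD('n)) + Csh * 2 powr (-\<alpha>) / (1 - 2 powr (-(1 + \<alpha>)))) (real CARD('n) + \<alpha>)"
  unfolding ball_growth_on_def
proof (intro ballI allI impI)
  fix z :: "real^'n" and r :: real assume r: "0 < r" "r \<le> 1/2"
  define d where "d = CARD('n)"
  define \<theta> where "\<theta> = 2 powr (-(1 + \<alpha>))"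
  define A where "A = Csh * 2 powr (-\<alpha>) * r powr (d + \<alpha>)"
  have \<theta>: "0 < \<theta>" "\<theta> < 1" using \<alpha> by (auto simp: \<theta>_def powr_less_one)
  have A: "0 \<le> A" by (simp add: A_def Csh_def)
  have "emeasure (density lborel (ball_dens q)) (ball z r)
      \<le> ennreal (r powr \<alpha>) * emeasure lborel (ball z r)
        + (\<Sum>k. ennreal ((r / 2 ^ Suc k) powr \<alpha>) * emeasure lborel (ball z r \<inter> (cball 0 1 - cball 0 (1 - r / 2 ^ k))))"
    unfolding \<alpha>_def using \<alpha> r by (intro emeasure_density_ball_dens_le_shells) (simp_all add: \<alpha>_def)
  also have "\<dots> \<le> ennreal (r powr \<alpha> * (unit_ball_vol d * r powr d)) + (\<Sum>k. ennreal (A * \<theta> ^ k))"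
  proof (intro add_mono suminf_le summableI)
    show "ennreal (r powr \<alpha>) * emeasure lborel (ball z r) \<le> ennreal (r powr \<alpha> * (unit_ball_vol d * r powr d))"
      using r by (simp add: emeasure_ball d_def powr_realpow ennreal_mult)
    show "ennreal ((r / 2 ^ Suc k) powr \<alpha>) * emeasure lborel (ball z r \<inter> (cball 0 1 - cball 0 (1 - r / 2 ^ k)))
        \<le> ennreal (A * \<theta> ^ k)" for k
      unfolding A_def \<theta>_def d_def Csh_def using r by (rule emeasure_dyadic_shell_le)
  qed
  also have "(\<Sum>k. ennreal (A * \<theta> ^ k)) = ennreal (A * (1 / (1 - \<theta>)))"
    using \<theta> A by (simp add: suminf_ennreal2 summable_geometric suminf_mult suminf_geometric)
  also have "ennreal (r powr \<alpha> * (unit_ball_vol d * r powr d)) + ennreal (A * (1 / (1 - \<theta>)))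
      = ennreal ((unit_ball_vol d + Csh * 2 powr (-\<alpha>) / (1 - \<theta>)) * r powr (d + \<alpha>))"
    using \<theta> A r by (subst ennreal_plus[symmetric]) (auto simp: A_def Csh_def powr_add field_simps)
  finally show "emeasure (density lborel (ball_dens q)) (ball z r)
      \<le> ennreal ((unit_ball_vol (CARD('n)) + Csh * 2 powr (-\<alpha>) / (1 - 2 powr (-(1 + \<alpha>))))
                * r powr (real CARD('n) + \<alpha>))"
    by (simp add: d_def \<theta>_def)
qed

text \<open>For \<open>q > d - 2\<close> the exponent \<open>(q + d)/2\<close> is \<open>d + \<alpha>\<close>, where \<open>\<alpha>\<close> is the exponent
  of the density.\<close>
lemma ball_growth_on_density_ball_dens_min:
  assumes q: "real CARD('n) - 2 < q"
  obtains C where "0 \<le> C" "ball_growth_on (density lborel (ball_dens q) :: (real^'n) measure) UNIV (1/2) C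
    (min (real CARD('n)) ((q + real CARD('n)) / 2))"
proof -
  define \<alpha> where "\<alpha> = (q - real CARD('n)) / 2"
  have "\<exists>C\<ge>0. ball_growth_on (density lborel (ball_dens q) :: (real^'n) measure) UNIV (1/2) C
      (min (real CARD('n)) ((q + real CARD('n)) / 2))"
  proof (cases "0 \<le> \<alpha>")
    case True
    then have "min (real CARD('n)) ((q + real CARD('n)) / 2) = real CARD('n)" by (simp add: \<alpha>_def)
    moreover have "ball_dens q (y::real^'n) \<le> 1" for y
      using True by (intro ball_dens_le_1) (simp add: \<alpha>_def)
    then have "ball_growth_on (density lborel (ball_dens q) :: (real^'n) measure) UNIV (1/2)
        (1 * unit_ball_vol (CARD('n))) (real CARD('n))"
      using ball_growth_on_density_bounded[of "ball_dens q :: real^'n \<Rightarrow> ennreal" UNIV 1 UNIV "1/2"] by simp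
    ultimately show ?thesis by (intro exI[of _ "1 * unit_ball_vol (CARD('n))"]) auto
  next
    case False
    have "-1 < \<alpha>" using q by (simp add: \<alpha>_def)
    define C0 where "C0 = unit_ball_vol (CARD('n))
      + real CARD('n) * unit_ball_vol (CARD('n)) * 4 ^ CARD('n) * 2 powr (-\<alpha>) / (1 - 2 powr (-(1 + \<alpha>)))"
    have "2 powr (-(1 + \<alpha>)) < 1" using \<open>-1 < \<alpha>\<close> by (simp add: powr_less_one)
    then have "0 \<le> C0" by (simp add: C0_def)
    moreover have "ball_growth_on (density lborel (ball_dens q) :: (real^'n) measure) UNIV (1/2) C0
        (real CARD('n) + \<alpha>)"
      unfolding C0_def \<alpha>_def using \<open>-1 < \<alpha>\<close> False
      by (intro ball_growth_on_density_ball_dens) (simp_all add: \<alpha>_def)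
    moreover have "min (real CARD('n)) ((q + real CARD('n)) / 2) = real CARD('n) + \<alpha>"
      using False by (simp add: \<alpha>_def min_def field_simps)
    ultimately show ?thesis by auto
  qed
  with that show thesis by blast
qed

lemma nn_integral_ball_dens_neq_0: "(\<integral>\<^sup>+ y. ball_dens q (y::real^'n) \<partial>lborel) \<noteq> 0"
proof -
  define a where "a = (q - real CARD('n)) / 2"
  define c where "c = min 1 ((3/4) powr a)"
  have c: "0 < c" by (simp add: c_def)
  have "ennreal c * indicator (ball 0 (1/2)) y \<le> ball_dens q y" for y :: "real^'n"
  proof (cases "y \<in> ball 0 (1/2)")
    case True
    then have "norm y ^ 2 \<le> (1/2) ^ 2" by (intro power_mono) auto
    then have b: "3/4 \<le> 1 - norm y ^ 2" "1 - norm y ^ 2 \<le> 1" by (auto simp: power2_eq_square)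
    have "c \<le> (1 - norm y ^ 2) powr a"
    proof (cases "0 \<le> a")
      case True
      then have "(3/4) powr a \<le> (1 - norm y ^ 2) powr a" using b by (intro powr_mono2) auto
      then show ?thesis by (simp add: c_def)
    next
      case False
      then have "1 powr a \<le> (1 - norm y ^ 2) powr a" using b by (intro powr_mono2') auto
      then show ?thesis by (simp add: c_def)
    qed
    then show ?thesis using True by (simp add: ball_dens_def a_def indicator_def ennreal_leI)
  qed simp
  then have "(\<integral>\<^sup>+ y. ennreal c * indicator (ball 0 (1/2)) (y::real^'n) \<partial>lborel)
      \<le> (\<integral>\<^sup>+ y. ball_dens q (y::real^'n) \<partial>lborel)"
    by (intro nn_integral_mono)
  moreover have "0 < (\<integral>\<^sup>+ y. ennreal c * indicator (ball 0 (1/2)) (y::real^'n) \<partial>lborel)"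
    using c by (simp add: nn_integral_cmult_indicator emeasure_ball ennreal_zero_less_mult_iff)
  ultimately show ?thesis by auto
qed

lemma emeasure_mu_q_eq_density:
  assumes "q \<noteq> real CARD('n) - 2"
  obtains c where "0 \<le> c"
    "\<And>B. B \<in> sets borel \<Longrightarrow> emeasure (mu_q q :: (real^'n) measure) B
       = emeasure (density lborel (ball_dens q)) B * ennreal c"
proof -
  define Z where "Z = (\<integral>\<^sup>+ y. ball_dens q (y::real^'n) \<partial>lborel)"
  have "inverse Z \<noteq> top" using nn_integral_ball_dens_neq_0 by (simp add: Z_def)
  then obtain c where c: "0 \<le> c" "inverse Z = ennreal c" by (cases "inverse Z") auto
  have "emeasure (mu_q q :: (real^'n) measure) B = emeasure (density lborel (ball_dens q)) B * ennreal c"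
    if B: "B \<in> sets borel" for B
  proof -
    have "emeasure (mu_q q :: (real^'n) measure) B = (\<integral>\<^sup>+ y. ball_dens q y * indicator B y / Z \<partial>lborel)"
      using assms B by (simp add: mu_q_def Z_def emeasure_density ennreal_times_divide mult.commute)
    also have "\<dots> = (\<integral>\<^sup>+ y. ball_dens q y * indicator B y \<partial>lborel) / Z"
      using B by (intro nn_integral_divide borel_measurable_times_ennreal borel_measurable_indicator) auto
    finally show ?thesis
      using B c by (simp add: emeasure_density divide_ennreal_def)
  qed
  with c that show thesis by blast
qed

lemma sets_mu_q [simp]: "sets (mu_q q :: (real^'n) measure) = sets borel"
  by (simp add: mu_q_def)

lemma finite_measure_mu_q: "finite_measure (mu_q q :: (real^'n) measure)"
proof (cases "q = real CARD('n) - 2")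
  case True
  then show ?thesis using finite_sphere_prob by (simp add: mu_q_def)
next
  case False
  define Z where "Z = (\<integral>\<^sup>+ y. ball_dens q (y::real^'n) \<partial>lborel)"
  have "emeasure (mu_q q :: (real^'n) measure) UNIV = Z / Z"
    using False by (simp add: mu_q_def emeasure_density Z_def nn_integral_divide)
  also have "\<dots> \<le> 1"
  proof (cases "Z = top")
    case False
    then have "Z / Z = 1"
      using nn_integral_ball_dens_neq_0[of q] by (intro ennreal_divide_self) (auto simp: Z_def top.not_eq_extremum)
    then show ?thesis by simp
  qed simp
  finally show ?thesis
    using False by (intro finite_measureI) (auto simp: mu_q_def top_unique)
qed

text \<open>The exponent \<open>(q + d)/2\<close> is \<open>d - 1\<close>, the dimension of the sphere, for \<open>q = d - 2\<close>.\<close>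
lemma ball_growth_on_mu_q:
  assumes q: "real CARD('n) - 2 \<le> q"
  obtains C where "0 \<le> C"
    "ball_growth_on (mu_q q :: (real^'n) measure) UNIV (1/2) C (min (real CARD('n)) ((q + real CARD('n)) / 2))"
proof (cases "q = real CARD('n) - 2")
  case True
  then have "min (real CARD('n)) ((q + real CARD('n)) / 2) = real CARD('n) - 1" by simp
  moreover have "ball_growth_on (mu_q q :: (real^'n) measure) UNIV (1/2) (2 ^ CARD('n)) (real CARD('n) - 1)"
    using True ball_growth_on_sphere_prob by (simp add: mu_q_def)
  ultimately show thesis by (intro that[of "2 ^ CARD('n)"]) auto
next
  case False
  obtain c where c: "0 \<le> c" and mu_q: "\<And>B. B \<in> sets borel \<Longrightarrow>
      emeasure (mu_q q :: (real^'n) measure) B = emeasure (density lborel (ball_dens q)) B * ennreal c"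
    using emeasure_mu_q_eq_density[OF False] by blast
  obtain C where "0 \<le> C" "ball_growth_on (density lborel (ball_dens q) :: (real^'n) measure) UNIV (1/2) C
      (min (real CARD('n)) ((q + real CARD('n)) / 2))"
  proof (rule ball_growth_on_density_ball_dens_min)
    show "real CARD('n) - 2 < q" using q False by simp
  qed
  with c mu_q show thesis by (intro that[of "C * c"] ball_growth_on_cmult) auto
qed

lemma ball_growth_on_mu_q_off_sphere:
  fixes z0 :: "real^'n"
  assumes "norm z0 \<noteq> 1"
  obtains \<epsilon> C where "0 < \<epsilon>" "0 \<le> C" "ball_growth_on (mu_q q) (ball z0 \<epsilon>) \<epsilon> C (real CARD('n))"
proof -
  define \<epsilon> where "\<epsilon> = \<bar>1 - norm z0\<bar> / 4"
  have \<epsilon>: "0 < \<epsilon>" using assms by (simp add: \<epsilon>_def)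
  have balls: "ball z \<epsilon> \<subseteq> ball z0 (2 * \<epsilon>)" if "z \<in> ball z0 \<epsilon>" for z
  proof
    fix x assume "x \<in> ball z \<epsilon>"
    then show "x \<in> ball z0 (2 * \<epsilon>)" using that dist_triangle[of z0 x z] by simp
  qed
  have far: "2 * \<epsilon> \<le> \<bar>1 - norm y\<bar>" if "y \<in> ball z0 (2 * \<epsilon>)" for y
    using that norm_triangle_ineq3[of y z0] abs_triangle_ineq[of "1 - norm y" "norm y - norm z0"]
    by (simp add: \<epsilon>_def dist_norm norm_minus_commute)
  show thesis
  proof (cases "q = real CARD('n) - 2")
    case True
    have "ball_growth_on (mu_q q :: (real^'n) measure) (ball z0 \<epsilon>) \<epsilon> 0 (real CARD('n))"
      unfolding ball_growth_on_def
    proof (intro ballI allI impI)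
      fix z r assume "z \<in> ball z0 \<epsilon>" "0 < r" "r \<le> \<epsilon>"
      then have "ball z r \<subseteq> ball z0 (2 * \<epsilon>)" using balls[of z] by auto
      then have "ball z r \<inter> sphere 0 1 = {}"
        using far \<epsilon> by fastforce
      then show "emeasure (mu_q q) (ball z r) \<le> ennreal (0 * r powr real CARD('n))"
        using True by (simp add: mu_q_def emeasure_sphere_prob_eq_0)
    qed
    with \<epsilon> show thesis by (intro that) auto
  next
    case False
    define B where "B = max 1 ((2 * \<epsilon>) powr ((q - real CARD('n)) / 2))"
    obtain c where c: "0 \<le> c" and mu_q: "\<And>B. B \<in> sets borel \<Longrightarrow>
        emeasure (mu_q q :: (real^'n) measure) B = emeasure (density lborel (ball_dens q)) B * ennreal c"
      using emeasure_mu_q_eq_density[OF False] by blast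
    have "ball_growth_on (density lborel (ball_dens q) :: (real^'n) measure) (ball z0 \<epsilon>) \<epsilon>
        (B * unit_ball_vol DIM(real^'n)) DIM(real^'n)"
    proof (rule ball_growth_on_density_bounded)
      show "ball_dens q y \<le> ennreal B" if "y \<in> ball z0 (2 * \<epsilon>)" for y :: "real^'n"
        unfolding B_def using far[OF that] \<epsilon> by (intro ball_dens_le_off_sphere) auto
    qed (use balls in \<open>auto simp: B_def\<close>)
    then have "ball_growth_on (density lborel (ball_dens q) :: (real^'n) measure) (ball z0 \<epsilon>) \<epsilon>
        (B * unit_ball_vol (CARD('n))) (real CARD('n))"
      by simp
    then have "ball_growth_on (mu_q q) (ball z0 \<epsilon>) \<epsilon> (B * unit_ball_vol (CARD('n)) * c) (real CARD('n))"
      by (rule ball_growth_on_cmult[OF _ c]) (simp add: mu_q)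
    with c \<epsilon> show thesis by (intro that) (auto simp: B_def)
  qed
qed

section \<open>Linear images\<close>

lemma emeasure_distr_linear_ball_le:
  fixes f :: "'a::euclidean_space \<Rightarrow> 'b::euclidean_space"
  assumes f: "linear f" and \<sigma>: "0 < \<sigma>" "\<And>x. \<sigma> * norm x \<le> norm (f x)"
    and sets: "sets \<nu> = sets borel"
  shows "emeasure (distr \<nu> borel f) (ball (f z) r) \<le> emeasure \<nu> (ball z (r / \<sigma>))"
proof -
  have "f \<in> \<nu> \<rightarrow>\<^sub>M borel"
    using linear_continuous_on[OF linear_conv_bounded_linear[THEN iffD1, OF f]]
    by (simp add: measurable_cong_sets[OF sets refl] borel_measurable_continuous_onI)
  then have "emeasure (distr \<nu> borel f) (ball (f z) r) = emeasure \<nu> (f -` ball (f z) r \<inter> space \<nu>)"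
    by (simp add: emeasure_distr)
  also have "\<dots> \<le> emeasure \<nu> (ball z (r / \<sigma>))"
  proof (rule emeasure_mono)
    show "f -` ball (f z) r \<inter> space \<nu> \<subseteq> ball z (r / \<sigma>)"
    proof clarify
      fix y assume "f y \<in> ball (f z) r"
      then have "\<sigma> * norm (z - y) < r"
        using \<sigma>(2)[of "z - y"] by (simp add: dist_norm linear_diff[OF f])
      then show "y \<in> ball z (r / \<sigma>)" using \<sigma>(1) by (simp add: dist_norm field_simps)
    qed
  qed (simp add: sets)
  finally show ?thesis .
qed

lemma ball_growth_on_distr_linear:
  fixes f :: "'a::euclidean_space \<Rightarrow> 'b::euclidean_space"
  assumes f: "linear f" and \<sigma>: "0 < \<sigma>" "\<And>x. \<sigma> * norm x \<le> norm (f x)"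
    and sets: "sets \<nu> = sets borel" and growth: "ball_growth_on \<nu> U r0 C \<beta>"
  shows "ball_growth_on (distr \<nu> borel f) (f ` U) (\<sigma> * r0) (C / \<sigma> powr \<beta>) \<beta>"
  unfolding ball_growth_on_def
proof (intro ballI allI impI)
  fix x r assume "x \<in> f ` U" "0 < r" "r \<le> \<sigma> * r0"
  then obtain z where "z \<in> U" "x = f z" by blast
  have "emeasure (distr \<nu> borel f) (ball x r) \<le> emeasure \<nu> (ball z (r / \<sigma>))"
    unfolding \<open>x = f z\<close> by (rule emeasure_distr_linear_ball_le[OF f \<sigma> sets])
  also have "\<dots> \<le> ennreal (C * (r / \<sigma>) powr \<beta>)"
    using \<open>z \<in> U\<close> \<open>0 < r\<close> \<open>r \<le> \<sigma> * r0\<close> \<sigma>(1)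
    by (intro ball_growth_onD[OF growth]) (auto simp: field_simps)
  also have "C * (r / \<sigma>) powr \<beta> = C / \<sigma> powr \<beta> * r powr \<beta>"
    using \<open>0 < r\<close> \<sigma>(1) by (simp add: powr_divide)
  finally show "emeasure (distr \<nu> borel f) (ball x r) \<le> ennreal (C / \<sigma> powr \<beta> * r powr \<beta>)" .
qed

lemma frontier_injective_linear_image:
  fixes f :: "'a::euclidean_space \<Rightarrow> 'a"
  assumes "linear f" "inj f"
  shows "frontier (f ` S) = f ` frontier S"
  using assms
  by (simp add: frontier_def closure_injective_linear_image[symmetric] interior_injective_linear_image
      image_set_diff)

lemma diagonal_matrix_vector_mult:
  fixes D :: "real^'n^'n"
  assumes "\<forall>i j. i \<noteq> j \<longrightarrow> D $ i $ j = 0"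
  shows "(D *v x) $ i = D $ i $ i * x $ i"
proof -
  have "(D *v x) $ i = (\<Sum>j\<in>UNIV. D $ i $ j * x $ j)" by (simp add: matrix_vector_mult_def)
  also have "\<dots> = D $ i $ i * x $ i"
    using assms by (subst sum.mono_neutral_right[of UNIV "{i}"]) auto
  finally show ?thesis .
qed

lemma inj_orthogonal_diagonal_mult:
  fixes R D :: "real^'n^'n"
  assumes R: "orthogonal_matrix R"
    and D: "\<forall>i j. i \<noteq> j \<longrightarrow> D $ i $ j = 0" "\<forall>i. D $ i $ i > 0"
  shows "inj (\<lambda>x. R *v (D *v x))"
proof (rule injI)
  fix x y :: "real^'n" assume "R *v (D *v x) = R *v (D *v y)"
  then have "norm (R *v (D *v (x - y))) = 0"
    by (simp add: matrix_vector_mult_diff_distrib)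
  moreover have "orthogonal_transformation ((*v) R)"
    using R by (simp add: orthogonal_transformation_matrix matrix_vector_mul_linear)
  ultimately have "D *v (x - y) = 0" by (simp add: orthogonal_transformation_norm)
  then show "x = y"
    using D by (simp add: vec_eq_iff diagonal_matrix_vector_mult[OF D(1)]) (metis less_irrefl)
qed

lemma kernel_potential_distr_linear:
  fixes T :: "real^'n \<Rightarrow> real^'n"
  assumes "homogeneous_kernel s Phi" "linear T" "finite_measure \<mu>" and sets: "sets \<mu> = sets borel"
  shows "kernel_potential s Phi (distr \<mu> borel T)"
proof -
  have "T \<in> borel_measurable borel"
    using assms(2) by (intro borel_measurable_continuous_onI linear_continuous_on) (simp add: linear_conv_bounded_linear)
  then have "T \<in> \<mu> \<rightarrow>\<^sub>M borel" by (simp only: measurable_cong_sets[OF sets refl])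
  then show ?thesis
    using assms(1,3)
    by (intro kernel_potential.intro kernel_potential_axioms.intro finite_measure.finite_measure_distr) simp_all
qed

lemma ball_growth_on_distr_mu_q_off_frontier:
  fixes T :: "real^'n \<Rightarrow> real^'n"
  assumes T: "linear T" "inj T" and x: "x \<notin> frontier (T ` cball 0 1)"
  obtains V r0 C where "open V" "x \<in> V" "0 < r0" "0 \<le> C"
    "ball_growth_on (distr (mu_q q) borel T) V r0 C (real CARD('n))"
proof -
  obtain \<sigma> where \<sigma>: "0 < \<sigma>" "\<And>x. \<sigma> * norm x \<le> norm (T x)"
    using linear_inj_bounded_below_pos[OF T] by blast
  have "surj T" by (simp add: linear_injective_imp_surjective T)
  then obtain z where z: "x = T z" by (metis surjD)
  with x have "norm z \<noteq> 1" by (auto simp: frontier_injective_linear_image[OF T])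
  then obtain \<epsilon> C where \<epsilon>: "0 < \<epsilon>" "0 \<le> C"
    and growth: "ball_growth_on (mu_q q) (ball z \<epsilon>) \<epsilon> C (real CARD('n))"
    by (rule ball_growth_on_mu_q_off_sphere)
  show thesis
  proof (rule that)
    show "open (T ` ball z \<epsilon>)" using open_surjective_linear_image[OF _ T(1) \<open>surj T\<close>] by simp
    show "x \<in> T ` ball z \<epsilon>" using z \<epsilon> by simp
    show "ball_growth_on (distr (mu_q q) borel T) (T ` ball z \<epsilon>) (\<sigma> * \<epsilon>)
        (C / \<sigma> powr real CARD('n)) (real CARD('n))"
      using T(1) \<sigma> growth by (intro ball_growth_on_distr_linear) simp_all
  qed (use \<sigma> \<epsilon> in auto)
qed

lemma ball_growth_on_distr_mu_q:
  fixes T :: "real^'n \<Rightarrow> real^'n"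
  assumes T: "linear T" "inj T" and q: "real CARD('n) - 2 \<le> q"
  obtains r0 C where "0 < r0" "0 \<le> C"
    "ball_growth_on (distr (mu_q q) borel T) UNIV r0 C (min (real CARD('n)) ((q + real CARD('n)) / 2))"
proof -
  define \<beta> where "\<beta> = min (real CARD('n)) ((q + real CARD('n)) / 2)"
  obtain \<sigma> where \<sigma>: "0 < \<sigma>" "\<And>x. \<sigma> * norm x \<le> norm (T x)"
    using linear_inj_bounded_below_pos[OF T] by blast
  have "surj T" by (simp add: linear_injective_imp_surjective T)
  obtain C where C: "0 \<le> C" and growth: "ball_growth_on (mu_q q :: (real^'n) measure) UNIV (1/2) C \<beta>"
    unfolding \<beta>_def by (rule ball_growth_on_mu_q[OF q])
  have "ball_growth_on (distr (mu_q q) borel T) (T ` UNIV) (\<sigma> * (1/2)) (C / \<sigma> powr \<beta>) \<beta>"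
    using T(1) \<sigma> growth by (intro ball_growth_on_distr_linear) simp_all
  with \<open>surj T\<close> \<sigma>(1) C show thesis
    by (intro that[of "\<sigma> / 2" "C / \<sigma> powr \<beta>"]) (simp_all add: \<beta>_def)
qed

theorem lemma3p2:
  fixes s q :: real
    and Phi :: "real^'n \<Rightarrow> real"
    and R D :: "real^'n^'n"
  assumes "CARD('n) \<ge> 2"
    and "0 < s" and "s < real CARD('n)"
    and "q \<ge> real CARD('n) - 2"
    and "continuous_on (sphere 0 1) Phi"
    and "\<forall>x\<in>sphere 0 1. Phi (- x) = Phi x"
    and "\<forall>x\<in>sphere 0 1. Phi x > 0"
    and "orthogonal_matrix R" and "det R = 1"
    and "\<forall>i j. i \<noteq> j \<longrightarrow> D $ i $ j = 0"
    and "\<forall>i. D $ i $ i > 0"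
  defines "E \<equiv> (\<lambda>x. R *v (D *v x)) ` cball 0 1"
    and "muE \<equiv> distr (mu_q q) borel (\<lambda>x. R *v (D *v x))"
  shows "potential s Phi muE \<in> borel_measurable lebesgue
      \<and> (\<forall>K. compact K \<longrightarrow> (\<integral>\<^sup>+ x \<in> K. potential s Phi muE x \<partial>lebesgue) < \<infinity>)
      \<and> (\<forall>x. x \<notin> frontier E \<longrightarrow> potential s Phi muE x < \<infinity>)
      \<and> continuous_on (- frontier E) (\<lambda>x. enn2real (potential s Phi muE x))
      \<and> (s < (q + real CARD('n)) / 2 \<longrightarrow>
           (\<forall>x. potential s Phi muE x < \<infinity>)
           \<and> continuous_on UNIV (\<lambda>x. enn2real (potential s Phi muE x)))"
proof -
  define T where "T = (\<lambda>x::real^'n. R *v (D *v x))"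
  have lin: "linear T"
    unfolding T_def by (simp add: matrix_vector_mul_assoc matrix_vector_mul_linear)
  have inj: "inj T"
    unfolding T_def using assms(8,10,11) by (rule inj_orthogonal_diagonal_mult)
  interpret kernel_potential s Phi muE
    unfolding muE_def T_def[symmetric] using assms(2,5,7)
    by (intro kernel_potential_distr_linear homogeneous_kernel.intro lin finite_measure_mu_q sets_mu_q)
  have off_frontier: "potential s Phi muE x < \<infinity> \<and> isCont (\<lambda>x. enn2real (potential s Phi muE x)) x"
    if x: "x \<notin> frontier E" for x
  proof -
    obtain V r0 C where "open V" "x \<in> V" "0 < r0" "0 \<le> C"
      and "ball_growth_on muE V r0 C (real CARD('n))"
      using x unfolding E_def muE_def T_def[symmetric]
      by (rule ball_growth_on_distr_mu_q_off_frontier[OF lin inj])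
    with potential_finite_isCont assms(3) show ?thesis by blast
  qed
  have everywhere: "(\<forall>x. potential s Phi muE x < \<infinity>) \<and> continuous_on UNIV (\<lambda>x. enn2real (potential s Phi muE x))"
    if "s < (q + real CARD('n)) / 2"
  proof -
    obtain r0 C where "0 < r0" "0 \<le> C"
      and growth: "ball_growth_on muE UNIV r0 C (min (real CARD('n)) ((q + real CARD('n)) / 2))"
      unfolding muE_def T_def[symmetric] by (rule ball_growth_on_distr_mu_q[OF lin inj assms(4)])
    moreover have "s < min (real CARD('n)) ((q + real CARD('n)) / 2)" using that assms(3) by simp
    ultimately show ?thesis using potential_continuous_on[OF growth] by simp
  qed
  have "potential s Phi muE \<in> borel_measurable lebesgue"
    using borel_measurable_potential by (simp add: measurable_completion)
  then show ?thesis
    using nn_integral_potential_compact_finite[OF assms(3)] off_frontier everywhere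
    by (auto intro: continuous_at_imp_continuous_on)
qed

end
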